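(* Let $\Delta_{-1}=\sum_{i=1}^n\sum_{s\ge1}(u^i-\lambda)f^i\,\theta_i^{s+1}\frac{\partial}{\partial u^{i,s}}$, a differential on $\hat{\mathcal A}[\lambda]$. Every element of $\hat{\mathcal C}[\lambda]$ and every element of $\hat d_i(\hat{\mathcal C}_i)\subset\hat{\mathcal A}$ ($i=1,\dots,n$) is a $\Delta_{-1}$-cocycle, and the inclusion of $\hat{\mathcal C}[\lambda]\oplus\bigoplus_{i=1}^n\hat d_i(\hat{\mathcal C}_i)$ into the cocycles induces an isomorphism $H(\hat{\mathcal A}[\lambda],\Delta_{-1})\cong\hat{\mathcal C}[\lambda]\oplus\bigoplus_{i=1}^n\operatorname{im}\big(\hat d_i:\hat{\mathcal C}_i\to\hat{\mathcal C}_i\big).$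
   Context: Let $n\ge1$, $U\subset\mathbb R^n$ a domain with coordinates $u^1,\dots,u^n$ with $u^i\neq u^j$ on $U$ for $i\ne j$, and $f^1,\dots,f^n$ smooth nowhere-vanishing functions on $U$. Let $\hat{\mathcal A}=C^\infty(U)[[u^{i,s}\ (1\le i\le n,\ s\ge1);\ \theta_i^s\ (1\le i\le n,\ s\ge0)]]$ with $u^{i,s}$ even and $\theta_i^s$ odd formal variables, graded by the standard degree $\deg u^{i,s}=\deg\theta_i^s=s$ (functions on $U$ of degree 0), and let $\hat{\mathcal A}[\lambda]$ be polynomials in an even formal variable $\lambda$ with coefficients in $\hat{\mathcal A}$. Define $\hat{\mathcal C}=C^\infty(U)[[\theta_1^0,\dots,\theta_n^0,\theta_1^1,\dots,\theta_n^1]]\subset\hat{\mathcal A}$ and, for each $i$, $\hat{\mathcal C}_i=\hat{\mathcal C}[[u^{i,s},\theta_i^{s+1}:s\ge1]]\subset\hat{\mathcal A}$ (only the variables with this fixed index $i$ are adjoined). On $\hat{\mathcal C}_i$ let $\hat d_i=\sum_{s\ge1}\theta_i^{s+1}\frac{\partial}{\partial u^{i,s}}$. *)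

theory Defs
  imports "HOL-Analysis.Analysis" "HOL-Library.Multiset"
begin

fun Ck_on :: "nat \<Rightarrow> (real^'n) set \<Rightarrow> (real^'n \<Rightarrow> real) \<Rightarrow> bool" where
  "Ck_on 0 U g = continuous_on U g"
| "Ck_on (Suc k) U g = (g differentiable_on U \<and> continuous_on U g \<and>
      (\<forall>j. Ck_on k U (\<lambda>x. frechet_derivative g (at x) (axis j 1))))"

definition smooth_on :: "(real^'n) set \<Rightarrow> (real^'n \<Rightarrow> real) \<Rightarrow> bool" where
  "smooth_on U g \<longleftrightarrow> (\<forall>k. Ck_on k U g)"

text \<open>A monomial of A[lambda]: a power of lambda, a multiset of even variables
  u^{i,s} (encoded as (i,s), s >= 1) and a finite set of odd variables theta_i^s
  (encoded as (i,s), s >= 0), the odd ones written as an ordered product in increasing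
  lexicographic order of (i,s).\<close>
type_synonym 'n mono = "nat \<times> ('n \<times> nat) multiset \<times> ('n \<times> nat) set"

definition mlam :: "'n mono \<Rightarrow> nat" where "mlam x = fst x"
definition mev :: "'n mono \<Rightarrow> ('n \<times> nat) multiset" where "mev x = fst (snd x)"
definition mth :: "'n mono \<Rightarrow> ('n \<times> nat) set" where "mth x = snd (snd x)"

definition valid_mono :: "'n mono \<Rightarrow> bool" where
  "valid_mono x \<longleftrightarrow> (\<forall>v\<in>#mev x. 1 \<le> snd v) \<and> finite (mth x)"

text \<open>Series: coefficient (a function on R^n, relevant on U) of each monomial.\<close>
type_synonym 'n series = "'n mono \<Rightarrow> real^'n \<Rightarrow> real"

definition lexless :: "('n::linorder \<times> nat) \<Rightarrow> ('n \<times> nat) \<Rightarrow> bool" where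
  "lexless a b \<longleftrightarrow> fst a < fst b \<or> (fst a = fst b \<and> snd a < snd b)"

text \<open>The space A[lambda] of polynomials in lambda with coefficients in A,
  coefficients in C^infinity(U) (normalised to vanish off U).\<close>
definition Alam :: "(real^'n) set \<Rightarrow> 'n series set" where
  "Alam U = {F. (\<forall>x. smooth_on U (F x) \<and> (\<forall>p. p \<notin> U \<longrightarrow> F x p = 0))
              \<and> (\<forall>x. \<not> valid_mono x \<longrightarrow> F x = (\<lambda>p. 0))
              \<and> (\<exists>N. \<forall>x. N < mlam x \<longrightarrow> F x = (\<lambda>p. 0))}"

text \<open>Partial derivative with respect to the even variable u^{i,s}.\<close>
definition pd :: "('n \<times> nat) \<Rightarrow> 'n series \<Rightarrow> 'n series" where
  "pd v F x = (\<lambda>p. real (count (mev x) v + 1) * F (mlam x, mev x + {#v#}, mth x) p)"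

text \<open>Left multiplication by the odd variable theta (with Koszul sign).\<close>
definition thmul :: "('n::linorder \<times> nat) \<Rightarrow> 'n series \<Rightarrow> 'n series" where
  "thmul v F x = (if v \<in> mth x
     then (\<lambda>p. (-1) ^ card {a \<in> mth x. lexless a v} * F (mlam x, mev x, mth x - {v}) p)
     else (\<lambda>p. 0))"

definition lammul :: "'n series \<Rightarrow> 'n series" where
  "lammul F x = (if mlam x = 0 then (\<lambda>p. 0) else F (mlam x - 1, mev x, mth x))"

definition funmul :: "(real^'n \<Rightarrow> real) \<Rightarrow> 'n series \<Rightarrow> 'n series" where
  "funmul g F x = (\<lambda>p. g p * F x p)"

definition Dterm :: "('n::{finite,linorder} \<Rightarrow> (real,'n) vec \<Rightarrow> real) \<Rightarrow> 'n \<Rightarrow> nat \<Rightarrow> 'n series \<Rightarrow> 'n series" where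
  "Dterm f i s F x =
     (let G = thmul (i, s+1) (pd (i, s) F)
      in (\<lambda>p. funmul (\<lambda>q. q $ i * f i q) G x p - lammul (funmul (f i) G) x p))"

text \<open>Delta_{-1} = sum_i sum_{s>=1} (u^i - lambda) f^i theta_i^{s+1} d/du^{i,s}; on each
  coefficient only the finitely many s with theta_i^{s+1} in the monomial contribute
  (all other terms vanish identically).\<close>
definition Delta :: "('n::{finite,linorder} \<Rightarrow> (real,'n) vec \<Rightarrow> real) \<Rightarrow> 'n series \<Rightarrow> 'n series" where
  "Delta f F x = (\<lambda>p. \<Sum>i\<in>UNIV. \<Sum>s\<in>{s. 1 \<le> s \<and> (i, s+1) \<in> mth x}. Dterm f i s F x p)"

text \<open>hat d_i = sum_{s>=1} theta_i^{s+1} d/du^{i,s}.\<close>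
definition dhat :: "'n::{finite,linorder} \<Rightarrow> 'n series \<Rightarrow> 'n series" where
  "dhat i F x = (\<lambda>p. \<Sum>s\<in>{s. 1 \<le> s \<and> (i, s+1) \<in> mth x}. thmul (i, s+1) (pd (i, s) F) x p)"

text \<open>hat C[lambda]: series in lambda, theta_j^0, theta_j^1 only.\<close>
definition Clam :: "(real^'n) set \<Rightarrow> 'n series set" where
  "Clam U = {F \<in> Alam U. \<forall>x. F x \<noteq> (\<lambda>p. 0) \<longrightarrow>
      mev x = {#} \<and> mth x \<subseteq> {v. snd v \<le> 1}}"

text \<open>hat C_i: hat C with u^{i,s} (s>=1) and theta_i^{s+1} (s>=1) adjoined; no lambda.\<close>
definition Ci :: "(real^'n) set \<Rightarrow> 'n \<Rightarrow> 'n series set" where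
  "Ci U i = {F \<in> Alam U. \<forall>x. F x \<noteq> (\<lambda>p. 0) \<longrightarrow>
      mlam x = 0 \<and> (\<forall>v\<in>#mev x. fst v = i) \<and>
      mth x \<subseteq> {v. snd v \<le> 1} \<union> {v. fst v = i \<and> 2 \<le> snd v}}"

end

theory Submission
  imports Defs
begin

text \<open>On the coefficient of a monomial, Delta_{-1} acts as sum_i (u^i - lambda) f^i dhat_i. Each
  dhat_i has a contracting homotopy hhat_i: dhat_i hhat_i + hhat_i dhat_i multiplies a monomial by
  its number of i-variables u^{i,s}, theta_i^{s+1} (s >= 1), and all these operators preserve the
  set of indices i that occur in this way. A series therefore splits into strata indexed by that set.
  On the empty stratum, which is C[lambda], Delta vanishes. On the stratum {i} a cocycle is
  dhat_i-closed, because u^i - lambda is not a zero divisor on polynomials in lambda, hence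
  dhat_i-exact; dividing its primitive by u^i - lambda with remainder writes it as dhat_i of a
  lambda-free element plus a coboundary. On a stratum with two active indices m1 \<noteq> m2 the
  homotopies weighted by ((u^m1 - u^m2) f^m)^-1 contract Delta, since
  (u^m1 - lambda) - (u^m2 - lambda) = u^m1 - u^m2 is invertible on U; so that stratum is exact.
  The same lambda-recursion as in the stratum {i} shows uniqueness.\<close>

section \<open>Smooth functions\<close>

lemma frechet_derivative_transform_open:
  assumes "open U" "x \<in> U" "g differentiable (at x)" "\<And>y. y \<in> U \<Longrightarrow> g y = h y"
  shows "h differentiable (at x) \<and> frechet_derivative h (at x) = frechet_derivative g (at x)"
proof -
  have "(g has_derivative frechet_derivative g (at x)) (at x)"
    using assms(3) frechet_derivative_works by blast
  then have "(h has_derivative frechet_derivative g (at x)) (at x)"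
    using has_derivative_transform_within_open[of g _ x UNIV U h] assms by auto
  then show ?thesis using frechet_derivative_at differentiable_def by metis
qed

lemma Ck_on_cong:
  assumes "open U" "Ck_on k U g" "\<And>x. x \<in> U \<Longrightarrow> g x = h x"
  shows "Ck_on k U h"
  using assms(2,3)
proof (induction k arbitrary: g h)
  case 0
  then show ?case using continuous_on_cong by (metis Ck_on.simps(1))
next
  case (Suc k)
  have dg: "\<And>x. x \<in> U \<Longrightarrow> g differentiable (at x)"
    using Suc.prems(1) assms(1) differentiable_on_eq_differentiable_at by auto
  have fd: "\<And>x. x \<in> U \<Longrightarrow> h differentiable (at x)
      \<and> frechet_derivative h (at x) = frechet_derivative g (at x)"
    using frechet_derivative_transform_open[OF assms(1) _ dg Suc.prems(2)] by blast
  have "h differentiable_on U"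
    using fd assms(1) differentiable_on_eq_differentiable_at by auto
  moreover have "continuous_on U h"
    using Suc.prems continuous_on_cong by (metis Ck_on.simps(2))
  moreover have "Ck_on k U (\<lambda>x. frechet_derivative h (at x) (axis j 1))" for j
    using Suc.IH[of "\<lambda>x. frechet_derivative g (at x) (axis j 1)"] Suc.prems fd by auto
  ultimately show ?case by simp
qed

lemma Ck_on_Suc_imp_Ck_on: "Ck_on (Suc k) U g \<Longrightarrow> Ck_on k U g"
  by (induction k arbitrary: g) auto

lemma Ck_on_const: "open U \<Longrightarrow> Ck_on k U (\<lambda>x. c)"
proof (induction k arbitrary: c)
  case (Suc k)
  have "frechet_derivative (\<lambda>x. c) (at x) = (\<lambda>h. 0)" for x
    using frechet_derivative_at[OF has_derivative_const] by metis
  then show ?case using Suc by simp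
qed simp

lemma Ck_on_component: "open U \<Longrightarrow> Ck_on k U (\<lambda>x::real^'n. x $ i)"
proof (induction k)
  case 0
  then show ?case by (simp add: continuous_on_component)
next
  case (Suc k)
  have lin: "bounded_linear (\<lambda>x::real^'n. x $ i)" by (rule bounded_linear_vec_nth)
  then have "frechet_derivative (\<lambda>x::real^'n. x $ i) (at x) = (\<lambda>x. x $ i)" for x
    using frechet_derivative_at[OF bounded_linear_imp_has_derivative] by metis
  then show ?case using Suc lin Ck_on_const[OF Suc.prems]
    by (auto simp: bounded_linear_imp_differentiable_on continuous_on_component)
qed

lemma Ck_on_add:
  "open U \<Longrightarrow> Ck_on k U g \<Longrightarrow> Ck_on k U h \<Longrightarrow> Ck_on k U (\<lambda>x. g x + h x)"
proof (induction k arbitrary: g h)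
  case 0
  then show ?case by (simp add: continuous_on_add)
next
  case (Suc k)
  have fd: "frechet_derivative (\<lambda>x. g x + h x) (at x) e
      = frechet_derivative g (at x) e + frechet_derivative h (at x) e" if "x \<in> U" for x e
  proof -
    have "g differentiable (at x)" "h differentiable (at x)"
      using Suc.prems that differentiable_on_eq_differentiable_at by auto
    then have "((\<lambda>x. g x + h x) has_derivative
        (\<lambda>e. frechet_derivative g (at x) e + frechet_derivative h (at x) e)) (at x)"
      by (intro has_derivative_add) (auto simp: frechet_derivative_works[symmetric])
    from fun_cong[OF frechet_derivative_at[OF this], of e] show ?thesis by simp
  qed
  have "Ck_on k U (\<lambda>x. frechet_derivative g (at x) (axis j 1)
      + frechet_derivative h (at x) (axis j 1))" for j
    by (rule Suc.IH[OF Suc.prems(1)]) (use Suc.prems(2,3) in simp_all)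
  then have "Ck_on k U (\<lambda>x. frechet_derivative (\<lambda>x. g x + h x) (at x) (axis j 1))" for j
    by (rule Ck_on_cong[OF Suc.prems(1)]) (simp only: fd)
  then show ?case using Suc.prems by (simp add: continuous_on_add)
qed

lemma Ck_on_mult:
  "open U \<Longrightarrow> Ck_on k U g \<Longrightarrow> Ck_on k U h \<Longrightarrow> Ck_on k U (\<lambda>x. g x * h x)"
proof (induction k arbitrary: g h)
  case 0
  then show ?case by (simp add: continuous_on_mult)
next
  case (Suc k)
  have fd: "frechet_derivative (\<lambda>x. g x * h x) (at x) e
      = g x * frechet_derivative h (at x) e + frechet_derivative g (at x) e * h x"
    if "x \<in> U" for x e
  proof -
    have "g differentiable (at x)" "h differentiable (at x)"
      using Suc.prems that differentiable_on_eq_differentiable_at by auto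
    then have "((\<lambda>x. g x * h x) has_derivative
        (\<lambda>e. g x * frechet_derivative h (at x) e + frechet_derivative g (at x) e * h x)) (at x)"
      by (intro has_derivative_mult) (auto simp: frechet_derivative_works[symmetric])
    from fun_cong[OF frechet_derivative_at[OF this], of e] show ?thesis by simp
  qed
  have gh: "Ck_on k U g" "Ck_on k U h"
    using Suc.prems Ck_on_Suc_imp_Ck_on by blast+
  have "Ck_on k U (\<lambda>x. g x * frechet_derivative h (at x) (axis j 1)
      + frechet_derivative g (at x) (axis j 1) * h x)" for j
  proof (rule Ck_on_add[OF Suc.prems(1)])
    show "Ck_on k U (\<lambda>x. g x * frechet_derivative h (at x) (axis j 1))"
      by (rule Suc.IH[OF Suc.prems(1) gh(1)]) (use Suc.prems(3) in simp)
    show "Ck_on k U (\<lambda>x. frechet_derivative g (at x) (axis j 1) * h x)"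
      by (rule Suc.IH[OF Suc.prems(1) _ gh(2)]) (use Suc.prems(2) in simp)
  qed
  then have "Ck_on k U (\<lambda>x. frechet_derivative (\<lambda>x. g x * h x) (at x) (axis j 1))" for j
    by (rule Ck_on_cong[OF Suc.prems(1)]) (simp only: fd)
  then show ?case using Suc.prems by (simp add: continuous_on_mult)
qed

lemma Ck_on_inverse:
  "open U \<Longrightarrow> Ck_on k U g \<Longrightarrow> (\<And>x. x \<in> U \<Longrightarrow> g x \<noteq> 0) \<Longrightarrow> Ck_on k U (\<lambda>x. inverse (g x))"
proof (induction k arbitrary: g)
  case 0
  then show ?case by (simp add: continuous_on_inverse)
next
  case (Suc k)
  have fd: "frechet_derivative (\<lambda>x. inverse (g x)) (at x) e
      = (- 1) * frechet_derivative g (at x) e * (inverse (g x) * inverse (g x))"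
    if "x \<in> U" for x e
  proof -
    have "g differentiable (at x)"
      using Suc.prems that differentiable_on_eq_differentiable_at by auto
    then have "((\<lambda>x. inverse (g x)) has_derivative
        (\<lambda>e. - (inverse (g x) * frechet_derivative g (at x) e * inverse (g x)))) (at x)"
      using Suc.prems(3)[OF that]
      by (intro Deriv.has_derivative_inverse) (auto simp: frechet_derivative_works[symmetric])
    from fun_cong[OF frechet_derivative_at[OF this], of e] show ?thesis
      by (simp add: algebra_simps)
  qed
  have inv: "Ck_on k U (\<lambda>x. inverse (g x))"
    using Suc Ck_on_Suc_imp_Ck_on by blast
  have "Ck_on k U (\<lambda>x. (- 1) * frechet_derivative g (at x) (axis j 1)
      * (inverse (g x) * inverse (g x)))" for j
    using Suc.prems by (intro Ck_on_mult Ck_on_const inv) simp_all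
  then have "Ck_on k U (\<lambda>x. frechet_derivative (\<lambda>x. inverse (g x)) (at x) (axis j 1))" for j
    by (rule Ck_on_cong[OF Suc.prems(1)]) (simp only: fd)
  then show ?case using Suc.prems by (simp add: continuous_on_inverse)
qed

lemma smooth_on_const: "open U \<Longrightarrow> smooth_on U (\<lambda>x. c)"
  by (simp add: smooth_on_def Ck_on_const)

lemma smooth_on_component: "open U \<Longrightarrow> smooth_on U (\<lambda>x. x $ i)"
  by (simp add: smooth_on_def Ck_on_component)

lemma smooth_on_add:
  "open U \<Longrightarrow> smooth_on U g \<Longrightarrow> smooth_on U h \<Longrightarrow> smooth_on U (\<lambda>x. g x + h x)"
  by (simp add: smooth_on_def Ck_on_add)

lemma smooth_on_mult:
  "open U \<Longrightarrow> smooth_on U g \<Longrightarrow> smooth_on U h \<Longrightarrow> smooth_on U (\<lambda>x. g x * h x)"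
  by (simp add: smooth_on_def Ck_on_mult)

lemma smooth_on_inverse:
  "open U \<Longrightarrow> smooth_on U g \<Longrightarrow> (\<And>x. x \<in> U \<Longrightarrow> g x \<noteq> 0) \<Longrightarrow> smooth_on U (\<lambda>x. inverse (g x))"
  by (simp add: smooth_on_def Ck_on_inverse)

lemma smooth_on_minus:
  assumes "open U" "smooth_on U g"
  shows "smooth_on U (\<lambda>x. - g x)"
  using smooth_on_mult[OF assms(1) smooth_on_const[OF assms(1), of "- 1"] assms(2)] by simp

lemma smooth_on_diff:
  assumes "open U" "smooth_on U g" "smooth_on U h"
  shows "smooth_on U (\<lambda>x. g x - h x)"
  using smooth_on_add[OF assms(1,2) smooth_on_minus[OF assms(1,3)]] by simp

lemma smooth_on_sum:
  "open U \<Longrightarrow> (\<And>a. a \<in> A \<Longrightarrow> smooth_on U (g a)) \<Longrightarrow> smooth_on U (\<lambda>x. \<Sum>a\<in>A. g a x)"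
  by (induction A rule: infinite_finite_induct) (simp_all add: smooth_on_const smooth_on_add)

lemma smooth_on_power: "open U \<Longrightarrow> smooth_on U g \<Longrightarrow> smooth_on U (\<lambda>x. g x ^ m)"
  by (induction m) (simp_all add: smooth_on_const smooth_on_mult)

section \<open>The operators dhat and hhat on coefficients\<close>

lemma mono_selectors[simp]: "mlam (k,M,T) = k" "mev (k,M,T) = M" "mth (k,M,T) = T"
  by (simp_all add: mlam_def mev_def mth_def)

text \<open>The sign produced by moving theta_v to the front of the ordered product of the theta_a, a in T.\<close>

definition koszul_sign :: "('n::linorder \<times> nat) set \<Rightarrow> 'n \<times> nat \<Rightarrow> real" where
  "koszul_sign T v = (-1) ^ card {a\<in>T. lexless a v}"

definition swap_sign :: "('n::linorder \<times> nat) \<Rightarrow> ('n \<times> nat) \<Rightarrow> real" where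
  "swap_sign w v = (if lexless w v then -1 else 1)"

lemma lexless_irrefl[simp]: "\<not> lexless v v"
  by (simp add: lexless_def)

lemma swap_sign_antisym: "w \<noteq> v \<Longrightarrow> swap_sign w v = - swap_sign v w"
  by (cases w; cases v) (auto simp: swap_sign_def lexless_def)

lemma koszul_sign_square: "koszul_sign T v * koszul_sign T v = 1"
  by (simp add: koszul_sign_def flip: power_add)

lemma koszul_sign_square_left: "koszul_sign T v * (koszul_sign T v * a) = a"
  by (simp add: mult.assoc[symmetric] koszul_sign_square)

lemma koszul_sign_remove_self[simp]: "koszul_sign (T - {v}) v = koszul_sign T v"
proof -
  have "{a\<in>T - {v}. lexless a v} = {a\<in>T. lexless a v}" by auto
  then show ?thesis by (simp add: koszul_sign_def)
qed

lemma koszul_sign_insert_self[simp]: "koszul_sign (insert v T) v = koszul_sign T v"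
proof -
  have "{a\<in>insert v T. lexless a v} = {a\<in>T. lexless a v}" by auto
  then show ?thesis by (simp add: koszul_sign_def)
qed

lemma koszul_sign_remove:
  assumes "finite T" "w \<in> T" "w \<noteq> v"
  shows "koszul_sign (T - {w}) v = swap_sign w v * koszul_sign T v"
proof (cases "lexless w v")
  case True
  have e: "{a\<in>T - {w}. lexless a v} = {a\<in>T. lexless a v} - {w}" by auto
  have f: "finite {a\<in>T. lexless a v}" using assms by auto
  have w: "w \<in> {a\<in>T. lexless a v}" using True assms by auto
  have c: "card {a\<in>T. lexless a v} = Suc (card ({a\<in>T. lexless a v} - {w}))"
    by (rule card.remove[OF f w])
  show ?thesis unfolding koszul_sign_def e using True c by (simp add: swap_sign_def)
next
  case False
  have e: "{a\<in>T - {w}. lexless a v} = {a\<in>T. lexless a v}" using False by auto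
  show ?thesis unfolding koszul_sign_def e using False by (simp add: swap_sign_def)
qed

lemma koszul_sign_insert:
  assumes "finite T" "w \<notin> T" "w \<noteq> v"
  shows "koszul_sign (insert w T) v = swap_sign w v * koszul_sign T v"
proof -
  have "koszul_sign (insert w T - {w}) v = swap_sign w v * koszul_sign (insert w T) v"
    using assms by (intro koszul_sign_remove) auto
  then have "koszul_sign T v = swap_sign w v * koszul_sign (insert w T) v" using assms by simp
  then have "swap_sign w v * koszul_sign T v = swap_sign w v * swap_sign w v * koszul_sign (insert w T) v" by simp
  moreover have "swap_sign w v * swap_sign w v = 1" by (simp add: swap_sign_def)
  ultimately show ?thesis by (simp add: mult.assoc)
qed

text \<open>The s >= 1 with theta_i^{s+1} in x, i.e. the terms of dhat i contributing to the coefficient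
  of x; dually for hhat.\<close>

definition dhat_indices :: "'n \<Rightarrow> 'n mono \<Rightarrow> nat set" where
  "dhat_indices i x = {s. 1 \<le> s \<and> (i, s+1) \<in> mth x}"
definition hhat_indices :: "'n \<Rightarrow> 'n mono \<Rightarrow> nat set" where
  "hhat_indices i x = {s. 1 \<le> s \<and> (i, s) \<in># mev x \<and> (i, s+1) \<notin> mth x}"

lemma finite_dhat_indices: "finite (mth x) \<Longrightarrow> finite (dhat_indices i x)"
proof -
  assume "finite (mth x)"
  moreover have "dhat_indices i x \<subseteq> (\<lambda>v. snd v - 1) ` mth x"
    unfolding dhat_indices_def by (force simp: image_iff)
  ultimately show ?thesis by (meson finite_imageI finite_subset)
qed

lemma finite_hhat_indices: "finite (hhat_indices i x)"
proof -
  have "hhat_indices i x \<subseteq> snd ` set_mset (mev x)"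
    unfolding hhat_indices_def by (force simp: image_iff)
  then show ?thesis by (meson finite_imageI finite_set_mset finite_subset)
qed

lemma dhat_eq:
  "dhat i F x p = (\<Sum>s\<in>dhat_indices i x. koszul_sign (mth x) (i,s+1) * (real (count (mev x) (i,s)) + 1)
     * F (mlam x, add_mset (i,s) (mev x), mth x - {(i,s+1)}) p)"
  unfolding dhat_def
  by (rule sum.cong) (auto simp: dhat_indices_def thmul_def pd_def mlam_def mev_def mth_def koszul_sign_def)

text \<open>The contracting homotopy sum_s u^{i,s} d/d(theta_i^{s+1}) of dhat i, written on coefficients.\<close>

definition hhat :: "'n::linorder \<Rightarrow> 'n series \<Rightarrow> 'n series" where
  "hhat i F x p = (\<Sum>s\<in>hhat_indices i x. koszul_sign (mth x) (i,s+1)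
     * F (mlam x, mev x - {#(i,s)#}, insert (i,s+1) (mth x)) p)"

text \<open>The number of factors u^{i,s}, theta_i^{s+1} (s >= 1) of a monomial; dhat and hhat preserve it.\<close>

definition weight :: "'n \<Rightarrow> 'n mono \<Rightarrow> nat" where
  "weight i x = size (filter_mset (\<lambda>v. fst v = i \<and> 1 \<le> snd v) (mev x)) + card (dhat_indices i x)"

definition same_weights :: "'n mono \<Rightarrow> 'n mono \<Rightarrow> bool" where
  "same_weights y x \<longleftrightarrow> mlam y = mlam x \<and> (\<forall>j. weight j y = weight j x)"

lemma dhat_indices_theta_to_u:
  assumes "s \<in> dhat_indices i (k,M,T)"
  shows "dhat_indices j (k', add_mset (i,s) M, T - {(i,s+1)})
    = (if j = i then dhat_indices i (k,M,T) - {s} else dhat_indices j (k,M,T))"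
  using assms by (auto simp: dhat_indices_def)

lemma dhat_indices_u_to_theta:
  assumes "t \<in> hhat_indices i (k,M,T)"
  shows "dhat_indices j (k', M - {#(i,t)#}, insert (i,t+1) T)
    = (if j = i then insert t (dhat_indices i (k,M,T)) else dhat_indices j (k,M,T))"
  using assms by (auto simp: dhat_indices_def hhat_indices_def)

lemma hhat_indices_theta_to_u:
  assumes "s \<in> dhat_indices i (k,M,T)"
  shows "hhat_indices j (k', add_mset (i,s) M, T - {(i,s+1)})
    = (if j = i then insert s (hhat_indices i (k,M,T)) else hhat_indices j (k,M,T))"
  using assms by (auto simp: dhat_indices_def hhat_indices_def)

lemma weight_theta_to_u:
  assumes "finite T" "s \<in> dhat_indices i (k,M,T)"
  shows "weight j (k', add_mset (i,s) M, T - {(i,s+1)}) = weight j (k,M,T)"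
proof (cases "j = i")
  case True
  have s1: "1 \<le> s" "s \<in> dhat_indices i (k,M,T)" using assms by (auto simp: dhat_indices_def)
  have fin: "finite (dhat_indices i (k,M,T))" using finite_dhat_indices[of "(k,M,T)"] assms by simp
  have "card (dhat_indices i (k,M,T) - {s}) + 1 = card (dhat_indices i (k,M,T))"
    using card.remove[OF fin s1(2)] by simp
  then show ?thesis using True s1 dhat_indices_theta_to_u[OF assms(2), of j k'] by (simp add: weight_def)
next
  case False
  have "filter_mset (\<lambda>v. fst v = j \<and> 1 \<le> snd v) (add_mset (i,s) M) = filter_mset (\<lambda>v. fst v = j \<and> 1 \<le> snd v) M"
    using False by simp
  then show ?thesis using False dhat_indices_theta_to_u[OF assms(2), of j k'] by (simp add: weight_def)
qed

lemma weight_u_to_theta: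
  assumes "finite T" "t \<in> hhat_indices i (k,M,T)"
  shows "weight j (k', M - {#(i,t)#}, insert (i,t+1) T) = weight j (k,M,T)"
proof (cases "j = i")
  case True
  have t1: "1 \<le> t" "(i,t) \<in># M" "t \<notin> dhat_indices i (k,M,T)" using assms by (auto simp: hhat_indices_def dhat_indices_def)
  have fin: "finite (dhat_indices i (k,M,T))" using finite_dhat_indices[of "(k,M,T)"] assms by simp
  have "filter_mset (\<lambda>v. fst v = i \<and> 1 \<le> snd v) (M - {#(i,t)#}) = filter_mset (\<lambda>v. fst v = i \<and> 1 \<le> snd v) M - {#(i,t)#}"
    using t1 by simp
  moreover have "(i,t) \<in># filter_mset (\<lambda>v. fst v = i \<and> 1 \<le> snd v) M" using t1 by simp
  ultimately have "size (filter_mset (\<lambda>v. fst v = i \<and> 1 \<le> snd v) (M - {#(i,t)#})) + 1 = size (filter_mset (\<lambda>v. fst v = i \<and> 1 \<le> snd v) M)"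
    using size_Diff_singleton[of "(i,t)" "filter_mset (\<lambda>v. fst v = i \<and> 1 \<le> snd v) M"]
      size_Diff1_less[of "(i,t)" "filter_mset (\<lambda>v. fst v = i \<and> 1 \<le> snd v) M"] by simp
  then show ?thesis using True t1 fin dhat_indices_u_to_theta[OF assms(2), of j k'] by (simp add: weight_def)
next
  case False
  have "filter_mset (\<lambda>v. fst v = j \<and> 1 \<le> snd v) (M - {#(i,t)#}) = filter_mset (\<lambda>v. fst v = j \<and> 1 \<le> snd v) M"
    using False by simp
  then show ?thesis using False dhat_indices_u_to_theta[OF assms(2), of j k'] by (simp add: weight_def)
qed

lemma size_filter_index_eq_sum_count:
  assumes "finite S"
  shows "size (filter_mset (\<lambda>v. fst v = i \<and> snd v \<in> S) M) = (\<Sum>s\<in>S. count M (i,s))"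
proof (induction M)
  case (add a M)
  obtain j r where a: "a = (j,r)" by (cases a)
  have "(\<Sum>s\<in>S. count (add_mset a M) (i,s))
      = (\<Sum>s\<in>S. count M (i,s)) + (\<Sum>s\<in>S. if s = r \<and> j = i then 1 else 0)"
    by (auto simp: a sum.distrib[symmetric] intro!: sum.cong)
  also have "(\<Sum>s\<in>S. if s = r \<and> j = i then 1 else (0::nat)) = (if j = i \<and> r \<in> S then 1 else 0)"
    using assms by (cases "j = i") (simp_all add: sum.delta)
  finally show ?case using add by (auto simp: a)
qed simp

lemma weight_eq_sum_count:
  assumes "finite T"
  shows "real (weight i (k,M,T)) = (\<Sum>s\<in>dhat_indices i (k,M,T). real (count M (i,s)) + 1)
    + (\<Sum>t\<in>hhat_indices i (k,M,T). real (count M (i,t)))"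
proof -
  let ?A = "dhat_indices i (k,M,T)" and ?B = "hhat_indices i (k,M,T)"
  have fin: "finite ?A" "finite ?B"
    using assms finite_dhat_indices[of "(k,M,T)"] finite_hhat_indices by auto
  have "filter_mset (\<lambda>v. fst v = i \<and> 1 \<le> snd v) M = filter_mset (\<lambda>v. fst v = i \<and> snd v \<in> ?A \<union> ?B) M"
    by (rule filter_mset_cong) (auto simp: dhat_indices_def hhat_indices_def)
  then have "size (filter_mset (\<lambda>v. fst v = i \<and> 1 \<le> snd v) M) = (\<Sum>s\<in>?A \<union> ?B. count M (i,s))"
    using size_filter_index_eq_sum_count[of "?A \<union> ?B"] fin by simp
  moreover have "?A \<inter> ?B = {}" by (auto simp: dhat_indices_def hhat_indices_def)
  ultimately show ?thesis
    using fin by (simp add: weight_def sum.union_disjoint sum.distrib)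
qed

lemma koszul_sign_exchange:
  assumes "finite T" "v \<in> T" "w \<notin> T"
  shows "koszul_sign T v * koszul_sign (T - {v}) w = - (koszul_sign T w * koszul_sign (insert w T) v)"
proof -
  have vw: "v \<noteq> w" using assms by auto
  show ?thesis
    unfolding koszul_sign_remove[OF assms(1,2) vw] koszul_sign_insert[OF assms(1,3) vw[symmetric]]
      swap_sign_antisym[OF vw] by simp
qed

lemma dhat_hhat_expand:
  fixes F :: "'n::{finite,linorder} series" and l m :: 'n and k M T p
  assumes "finite T"
  defines "A \<equiv> dhat_indices l (k,M,T)" and "B \<equiv> hhat_indices m (k,M,T)"
    and "X \<equiv> \<lambda>s t. F (k, add_mset (l,s) M - {#(m,t)#}, insert (m,t+1) (T - {(l,s+1)})) p"
  shows "dhat l (hhat m F) (k,M,T) p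
    = (if l = m then (\<Sum>s\<in>A. (real (count M (l,s)) + 1) * F (k,M,T) p) else 0)
      + (\<Sum>s\<in>A. \<Sum>t\<in>B. koszul_sign T (l,s+1) * koszul_sign (T - {(l,s+1)}) (m,t+1)
          * (real (count M (l,s)) + 1) * X s t)"
proof -
  have inner: "hhat m F (k, add_mset (l,s) M, T - {(l,s+1)}) p
      = (if l = m then koszul_sign T (l,s+1) * F (k,M,T) p else 0)
        + (\<Sum>t\<in>B. koszul_sign (T - {(l,s+1)}) (m,t+1) * X s t)" if s: "s \<in> A" for s
  proof (cases "l = m")
    case True
    have "s \<notin> B" "(l,s+1) \<in> T"
      using s True by (auto simp: A_def B_def dhat_indices_def hhat_indices_def)
    then show ?thesis
      using True s hhat_indices_theta_to_u[of s l k M T m k] finite_hhat_indices[of m "(k,M,T)"]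
      by (simp add: hhat_def A_def B_def X_def insert_absorb)
  next
    case False
    then show ?thesis using s hhat_indices_theta_to_u[of s l k M T m k]
      by (simp add: hhat_def A_def B_def X_def)
  qed
  have "dhat l (hhat m F) (k,M,T) p = (\<Sum>s\<in>A. koszul_sign T (l,s+1) * (real (count M (l,s)) + 1)
      * hhat m F (k, add_mset (l,s) M, T - {(l,s+1)}) p)"
    by (simp add: dhat_eq A_def)
  also have "\<dots> = (\<Sum>s\<in>A. (if l = m then (real (count M (l,s)) + 1) * F (k,M,T) p else 0)
      + (\<Sum>t\<in>B. koszul_sign T (l,s+1) * koszul_sign (T - {(l,s+1)}) (m,t+1)
          * (real (count M (l,s)) + 1) * X s t))"
  proof (intro sum.cong refl)
    fix s assume "s \<in> A"
    show "koszul_sign T (l,s+1) * (real (count M (l,s)) + 1) * hhat m F (k, add_mset (l,s) M, T - {(l,s+1)}) p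
      = (if l = m then (real (count M (l,s)) + 1) * F (k,M,T) p else 0)
        + (\<Sum>t\<in>B. koszul_sign T (l,s+1) * koszul_sign (T - {(l,s+1)}) (m,t+1)
          * (real (count M (l,s)) + 1) * X s t)"
      unfolding inner[OF \<open>s \<in> A\<close>]
      by (simp add: algebra_simps sum.distrib sum_distrib_left koszul_sign_square_left)
  qed
  finally show ?thesis by (cases "l = m") (simp_all add: sum.distrib)
qed

lemma hhat_dhat_expand:
  fixes F :: "'n::{finite,linorder} series" and l m :: 'n and k M T p
  assumes "finite T"
  defines "A \<equiv> dhat_indices l (k,M,T)" and "B \<equiv> hhat_indices m (k,M,T)"
    and "X \<equiv> \<lambda>s t. F (k, add_mset (l,s) M - {#(m,t)#}, insert (m,t+1) (T - {(l,s+1)})) p"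
  shows "hhat m (dhat l F) (k,M,T) p
    = (if l = m then (\<Sum>t\<in>B. real (count M (l,t)) * F (k,M,T) p) else 0)
      + (\<Sum>t\<in>B. \<Sum>s\<in>A. koszul_sign T (m,t+1) * koszul_sign (insert (m,t+1) T) (l,s+1)
          * (real (count M (l,s)) + 1) * X s t)"
proof -
  have inner: "dhat l F (k, M - {#(m,t)#}, insert (m,t+1) T) p
      = (if l = m then koszul_sign T (m,t+1) * real (count M (l,t)) * F (k,M,T) p else 0)
        + (\<Sum>s\<in>A. koszul_sign (insert (m,t+1) T) (l,s+1) * (real (count M (l,s)) + 1) * X s t)"
    if t: "t \<in> B" for t
  proof -
    have tT: "(m,t+1) \<notin> T" "(m,t) \<in># M" using t by (auto simp: B_def hhat_indices_def)
    define G where "G s = koszul_sign (insert (m,t+1) T) (l,s+1) * (real (count (M - {#(m,t)#}) (l,s)) + 1)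
        * F (k, add_mset (l,s) (M - {#(m,t)#}), insert (m,t+1) T - {(l,s+1)}) p" for s
    have split: "dhat l F (k, M - {#(m,t)#}, insert (m,t+1) T) p = (if l = m then G t else 0) + (\<Sum>s\<in>A. G s)"
    proof (cases "l = m")
      case True
      have "t \<notin> A" using tT True by (auto simp: A_def dhat_indices_def)
      then show ?thesis
        using True t dhat_indices_u_to_theta[of t m k M T l k] finite_dhat_indices[of "(k,M,T)" l] assms(1)
        by (simp add: dhat_eq G_def A_def B_def)
    next
      case False
      then show ?thesis using t dhat_indices_u_to_theta[of t m k M T l k]
        by (simp add: dhat_eq G_def A_def B_def)
    qed
    have Gt: "G t = koszul_sign T (m,t+1) * real (count M (l,t)) * F (k,M,T) p" if "l = m"
      using that tT by (simp add: G_def insert_absorb)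
    have Gs: "G s = koszul_sign (insert (m,t+1) T) (l,s+1) * (real (count M (l,s)) + 1) * X s t"
      if s: "s \<in> A" for s
    proof -
      have "(l,s) \<noteq> (m,t)" "(l,s+1) \<noteq> (m,t+1)"
        using s tT by (auto simp: A_def dhat_indices_def)
      then have "add_mset (l,s) (M - {#(m,t)#}) = add_mset (l,s) M - {#(m,t)#}"
          "insert (m,t+1) T - {(l,s+1)} = insert (m,t+1) (T - {(l,s+1)})"
          "count (M - {#(m,t)#}) (l,s) = count M (l,s)"
        using diff_union_swap[of "(m,t)" "(l,s)" M] by auto
      then show ?thesis by (simp add: G_def X_def)
    qed
    show ?thesis unfolding split using Gt Gs by (simp cong: sum.cong)
  qed
  have "hhat m (dhat l F) (k,M,T) p
      = (\<Sum>t\<in>B. koszul_sign T (m,t+1) * dhat l F (k, M - {#(m,t)#}, insert (m,t+1) T) p)"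
    by (simp add: hhat_def B_def)
  also have "\<dots> = (\<Sum>t\<in>B. (if l = m then real (count M (l,t)) * F (k,M,T) p else 0)
      + (\<Sum>s\<in>A. koszul_sign T (m,t+1) * koszul_sign (insert (m,t+1) T) (l,s+1)
          * (real (count M (l,s)) + 1) * X s t))"
  proof (intro sum.cong refl)
    fix t assume "t \<in> B"
    show "koszul_sign T (m,t+1) * dhat l F (k, M - {#(m,t)#}, insert (m,t+1) T) p
      = (if l = m then real (count M (l,t)) * F (k,M,T) p else 0)
        + (\<Sum>s\<in>A. koszul_sign T (m,t+1) * koszul_sign (insert (m,t+1) T) (l,s+1)
          * (real (count M (l,s)) + 1) * X s t)"
      unfolding inner[OF \<open>t \<in> B\<close>]
      by (simp add: algebra_simps sum.distrib sum_distrib_left koszul_sign_square_left)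
  qed
  finally show ?thesis by (cases "l = m") (simp_all add: sum.distrib)
qed

lemma dhat_hhat_anticommutator:
  fixes F :: "'n::{finite,linorder} series"
  assumes "finite T"
  shows "dhat l (hhat m F) (k,M,T) p + hhat m (dhat l F) (k,M,T) p
    = (if l = m then real (weight l (k,M,T)) * F (k,M,T) p else 0)"
proof -
  let ?A = "dhat_indices l (k,M,T)" and ?B = "hhat_indices m (k,M,T)"
  let ?X = "\<lambda>s t. F (k, add_mset (l,s) M - {#(m,t)#}, insert (m,t+1) (T - {(l,s+1)})) p"
  let ?D = "\<Sum>s\<in>?A. \<Sum>t\<in>?B. koszul_sign T (l,s+1) * koszul_sign (T - {(l,s+1)}) (m,t+1)
    * (real (count M (l,s)) + 1) * ?X s t"
  let ?H = "\<Sum>t\<in>?B. \<Sum>s\<in>?A. koszul_sign T (m,t+1) * koszul_sign (insert (m,t+1) T) (l,s+1)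
    * (real (count M (l,s)) + 1) * ?X s t"
  have "?D = - (\<Sum>s\<in>?A. \<Sum>t\<in>?B. koszul_sign T (m,t+1) * koszul_sign (insert (m,t+1) T) (l,s+1)
      * (real (count M (l,s)) + 1) * ?X s t)"
    unfolding sum_negf[symmetric]
  proof (intro sum.cong refl)
    fix s t assume "s \<in> ?A" "t \<in> ?B"
    then have "(l,s+1) \<in> T" "(m,t+1) \<notin> T" by (auto simp: dhat_indices_def hhat_indices_def)
    from koszul_sign_exchange[OF assms this]
    show "koszul_sign T (l,s+1) * koszul_sign (T - {(l,s+1)}) (m,t+1) * (real (count M (l,s)) + 1) * ?X s t
      = - (koszul_sign T (m,t+1) * koszul_sign (insert (m,t+1) T) (l,s+1)
        * (real (count M (l,s)) + 1) * ?X s t)"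
      by simp
  qed
  moreover have "?H = (\<Sum>s\<in>?A. \<Sum>t\<in>?B. koszul_sign T (m,t+1) * koszul_sign (insert (m,t+1) T) (l,s+1)
      * (real (count M (l,s)) + 1) * ?X s t)"
    by (rule sum.swap)
  ultimately have cancel: "?D + ?H = 0" by simp
  have dh: "dhat l (hhat m F) (k,M,T) p
      = (if l = m then (\<Sum>s\<in>?A. (real (count M (l,s)) + 1) * F (k,M,T) p) else 0) + ?D"
    by (rule dhat_hhat_expand[OF assms])
  have hd: "hhat m (dhat l F) (k,M,T) p
      = (if l = m then (\<Sum>t\<in>?B. real (count M (l,t)) * F (k,M,T) p) else 0) + ?H"
    by (rule hhat_dhat_expand[OF assms])
  show ?thesis
  proof (cases "l = m")
    case True
    have "real (weight l (k,M,T)) * F (k,M,T) p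
        = (\<Sum>s\<in>?A. (real (count M (l,s)) + 1) * F (k,M,T) p) + (\<Sum>t\<in>?B. real (count M (l,t)) * F (k,M,T) p)"
      unfolding weight_eq_sum_count[OF assms] True by (simp add: distrib_right sum_distrib_right)
    then show ?thesis using dh hd cancel True by simp
  next
    case False
    then show ?thesis using dh hd cancel by simp
  qed
qed

lemma sum_sum_antisym_zero:
  fixes \<phi> :: "'a \<Rightarrow> 'a \<Rightarrow> 'b::linordered_ab_group_add"
  assumes "finite A" "\<And>s t. s \<in> A \<Longrightarrow> t \<in> A \<Longrightarrow> s \<noteq> t \<Longrightarrow> \<phi> t s = - \<phi> s t"
  shows "(\<Sum>s\<in>A. \<Sum>t\<in>A - {s}. \<phi> s t) = 0"
proof -
  have e: "\<And>s. {t\<in>A. s \<noteq> t} = A - {s}" by auto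
  have e': "\<And>t. {s\<in>A. s \<noteq> t} = A - {t}" by auto
  have "(\<Sum>s\<in>A. \<Sum>t\<in>{t\<in>A. s \<noteq> t}. \<phi> s t) = (\<Sum>t\<in>A. \<Sum>s\<in>{s\<in>A. s \<noteq> t}. \<phi> s t)"
    by (rule sum.swap_restrict[OF assms(1) assms(1)])
  then have "(\<Sum>s\<in>A. \<Sum>t\<in>A - {s}. \<phi> s t) = (\<Sum>t\<in>A. \<Sum>s\<in>A - {t}. \<phi> s t)"
    unfolding e e' .
  also have "\<dots> = (\<Sum>t\<in>A. \<Sum>s\<in>A - {t}. - \<phi> t s)"
  proof (intro sum.cong refl)
    fix t s assume "t \<in> A" "s \<in> A - {t}"
    then show "\<phi> s t = - \<phi> t s" using assms(2)[of t s] by blast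
  qed
  also have "\<dots> = - (\<Sum>t\<in>A. \<Sum>s\<in>A - {t}. \<phi> t s)"
    by (simp add: sum_negf)
  finally show ?thesis by simp
qed

lemma dhat_dhat_zero:
  assumes fT: "finite T"
  shows "dhat i (dhat i F) (k,M,T) p = 0"
proof -
  define A where "A = dhat_indices i (k,M,T)"
  have fA: "finite A" using finite_dhat_indices[of "(k,M,T)" i] fT by (simp add: A_def)
  define c where "c s = real (count M (i,s))" for s
  define Y where "Y s t = F (k, add_mset (i,t) (add_mset (i,s) M), T - {(i,s+1)} - {(i,t+1)}) p" for s t
  define \<phi> where "\<phi> s t = koszul_sign T (i,s+1) * (c s + 1) * (koszul_sign (T - {(i,s+1)}) (i,t+1) * (c t + 1) * Y s t)" for s t
  have inner: "dhat i F (k, add_mset (i,s) M, T - {(i,s+1)}) p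
      = (\<Sum>t\<in>A - {s}. koszul_sign (T - {(i,s+1)}) (i,t+1) * (c t + 1) * Y s t)" if s: "s \<in> A" for s
  proof -
    have "dhat i F (k, add_mset (i,s) M, T - {(i,s+1)}) p = (\<Sum>t\<in>A - {s}. koszul_sign (T - {(i,s+1)}) (i,t+1)
        * (real (count (add_mset (i,s) M) (i,t)) + 1) * F (k, add_mset (i,t) (add_mset (i,s) M), T - {(i,s+1)} - {(i,t+1)}) p)"
      unfolding dhat_eq using dhat_indices_theta_to_u[of s i k M T i k] s by (simp add: A_def)
    also have "\<dots> = (\<Sum>t\<in>A - {s}. koszul_sign (T - {(i,s+1)}) (i,t+1) * (c t + 1) * Y s t)"
      by (intro sum.cong refl) (auto simp: c_def Y_def)
    finally show ?thesis .
  qed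
  have "dhat i (dhat i F) (k,M,T) p = (\<Sum>s\<in>A. \<Sum>t\<in>A - {s}. \<phi> s t)"
    unfolding dhat_eq[of i "dhat i F"] mono_selectors A_def[symmetric]
  proof (intro sum.cong refl)
    fix s assume "s \<in> A"
    show "koszul_sign T (i,s+1) * (real (count M (i,s)) + 1) * dhat i F (k, add_mset (i,s) M, T - {(i,s+1)}) p
      = (\<Sum>t\<in>A - {s}. \<phi> s t)"
      unfolding inner[OF \<open>s \<in> A\<close>] by (simp add: c_def sum_distrib_left \<phi>_def)
  qed
  also have "\<dots> = 0"
  proof (rule sum_sum_antisym_zero[OF fA])
    fix s t assume s: "s \<in> A" and t: "t \<in> A" and st0: "s \<noteq> t"
    have st: "(i,s+1) \<noteq> (i,t+1)" using st0 by auto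
    have sT: "(i,s+1) \<in> T" using s by (simp add: A_def dhat_indices_def)
    have tT: "(i,t+1) \<in> T" using t by (simp add: A_def dhat_indices_def)
    have Ys: "Y t s = Y s t" unfolding Y_def by (simp add: add_mset_commute Diff_insert2[symmetric] insert_commute)
    have r1: "koszul_sign (T - {(i,s+1)}) (i,t+1) = swap_sign (i,s+1) (i,t+1) * koszul_sign T (i,t+1)"
      by (rule koszul_sign_remove[OF fT sT st])
    have r2: "koszul_sign (T - {(i,t+1)}) (i,s+1) = swap_sign (i,t+1) (i,s+1) * koszul_sign T (i,s+1)"
      by (rule koszul_sign_remove[OF fT tT st[symmetric]])
    show "\<phi> t s = - \<phi> s t"
      unfolding \<phi>_def r1 r2 Ys swap_sign_antisym[OF st] by (simp add: algebra_simps)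
  qed
  finally show ?thesis .
qed

lemma dhat_cong_weights:
  assumes "valid_mono (k,M,T)" "\<And>y. valid_mono y \<Longrightarrow> same_weights y (k,M,T) \<Longrightarrow> F y p = G y p"
  shows "dhat i F (k,M,T) p = dhat i G (k,M,T) p"
proof -
  have fT: "finite T" using assms(1) by (simp add: valid_mono_def)
  have *: "F (k, add_mset (i,s) M, T - {(i,s+1)}) p = G (k, add_mset (i,s) M, T - {(i,s+1)}) p"
    if s: "s \<in> dhat_indices i (k,M,T)" for s
  proof -
    have "valid_mono (k, add_mset (i,s) M, T - {(i,s+1)})"
      using assms(1) s by (auto simp: valid_mono_def dhat_indices_def)
    moreover have "same_weights (k, add_mset (i,s) M, T - {(i,s+1)}) (k,M,T)"
      using weight_theta_to_u[OF fT s] by (simp add: same_weights_def)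
    ultimately show ?thesis using assms(2) by simp
  qed
  show ?thesis unfolding dhat_eq by (rule sum.cong) (simp_all add: *[simplified])
qed

lemma hhat_cong_weights:
  assumes "valid_mono (k,M,T)" "\<And>y. valid_mono y \<Longrightarrow> same_weights y (k,M,T) \<Longrightarrow> F y p = G y p"
  shows "hhat i F (k,M,T) p = hhat i G (k,M,T) p"
proof -
  have fT: "finite T" using assms(1) by (simp add: valid_mono_def)
  have *: "F (k, M - {#(i,s)#}, insert (i,s+1) T) p = G (k, M - {#(i,s)#}, insert (i,s+1) T) p"
    if s': "s \<in> hhat_indices i (k,M,T)" for s
  proof -
    have "valid_mono (k, M - {#(i,s)#}, insert (i,s+1) T)"
      using assms(1) s' by (auto simp: valid_mono_def hhat_indices_def dest: in_diffD)
    moreover have "same_weights (k, M - {#(i,s)#}, insert (i,s+1) T) (k,M,T)"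
      using weight_u_to_theta[OF fT s'] by (simp add: same_weights_def)
    ultimately show ?thesis using assms(2) by simp
  qed
  show ?thesis unfolding hhat_def by (rule sum.cong) (simp_all add: *[simplified])
qed

lemma dhat_invalid:
  assumes "\<not> valid_mono (k,M,T)" "\<And>y. \<not> valid_mono y \<Longrightarrow> F y p = 0"
  shows "dhat i F (k,M,T) p = 0"
proof -
  have "F (k, add_mset (i,s) M, T - {(i,s+1)}) p = 0" if "s \<in> dhat_indices i (k,M,T)" for s
    using assms that by (auto simp: valid_mono_def dhat_indices_def)
  then show ?thesis by (simp add: dhat_eq)
qed

lemma hhat_invalid:
  assumes "\<not> valid_mono (k,M,T)" "\<And>y. \<not> valid_mono y \<Longrightarrow> F y p = 0"
  shows "hhat i F (k,M,T) p = 0"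
  unfolding hhat_def
proof (intro sum.neutral ballI)
  fix s assume s: "s \<in> hhat_indices i (k,M,T)"
  have "\<not> valid_mono (k, M - {#(i,s)#}, insert (i,s+1) T)"
  proof
    assume v: "valid_mono (k, M - {#(i,s)#}, insert (i,s+1) T)"
    have "\<forall>w\<in>#M. 1 \<le> snd w"
    proof
      fix w assume w: "w \<in># M"
      show "1 \<le> snd w"
      proof (cases "w = (i,s)")
        case True then show ?thesis using s by (simp add: hhat_indices_def)
      next
        case False
        then have "w \<in># M - {#(i,s)#}" using w by (simp add: in_diff_count)
        then show ?thesis using v by (simp add: valid_mono_def)
      qed
    qed
    then show False using v assms(1) by (simp add: valid_mono_def)
  qed
  then show "koszul_sign (mth (k,M,T)) (i,s+1) * F (mlam (k,M,T), mev (k,M,T) - {#(i,s)#}, insert (i,s+1) (mth (k,M,T))) p = 0"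
    using assms(2) by simp
qed

lemma dhat_weight_zero:
  assumes "finite T" "weight i (k,M,T) = 0"
  shows "dhat i F (k,M,T) p = 0"
proof -
  have "dhat_indices i (k,M,T) = {}"
    using assms finite_dhat_indices[of "(k,M,T)" i] by (simp add: weight_def)
  then show ?thesis by (simp add: dhat_eq)
qed

lemma dhat_cmult: "dhat i (\<lambda>y p. g p * F y p) x p = g p * dhat i F x p"
  by (simp add: dhat_eq sum_distrib_left algebra_simps)

lemma hhat_cmult: "hhat i (\<lambda>y p. g p * F y p) x p = g p * hhat i F x p"
  by (simp add: hhat_def sum_distrib_left algebra_simps)

lemma dhat_diff: "dhat i (\<lambda>y p. F y p - G y p) x p = dhat i F x p - dhat i G x p"
  by (simp add: dhat_eq sum_subtractf algebra_simps)

lemma dhat_sum: "dhat i (\<lambda>y p. \<Sum>j\<in>J. F j y p) x p = (\<Sum>j\<in>J. dhat i (F j) x p)"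
  by (simp add: dhat_eq sum_distrib_left sum.swap[of _ J])

section \<open>Delta and the strata of a series\<close>

definition mult_u_minus_lambda :: "'n::finite \<Rightarrow> 'n series \<Rightarrow> 'n series" where
  "mult_u_minus_lambda i F x p = p $ i * F x p - (if mlam x = 0 then 0 else F (mlam x - 1, mev x, mth x) p)"

lemma Delta_eq: "Delta f F x p = (\<Sum>i\<in>UNIV. f i p * mult_u_minus_lambda i (dhat i F) x p)"
proof -
  obtain k M T where x: "x = (k,M,T)" by (cases x)
  have "(\<Sum>s\<in>{s. 1 \<le> s \<and> (i, s + 1) \<in> T}. Dterm f i s F (k,M,T) p)
      = f i p * mult_u_minus_lambda i (dhat i F) (k,M,T) p" for i
    by (cases k) (simp_all add: Dterm_def Let_def mult_u_minus_lambda_def dhat_def lammul_def funmul_def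
        sum_subtractf sum_distrib_left algebra_simps)
  then show ?thesis by (simp add: x Delta_def)
qed

lemma Delta_eq_zero_if_dhat_zero: "(\<And>i y. dhat i F y p = 0) \<Longrightarrow> Delta f F x p = 0"
  by (cases "mlam x = 0") (simp_all add: Delta_eq mult_u_minus_lambda_def)

definition active :: "'n mono \<Rightarrow> 'n set" where
  "active x = {j. 0 < weight j x}"

definition stratum :: "'n set \<Rightarrow> 'n series \<Rightarrow> 'n series" where
  "stratum S F x p = (if active x = S then F x p else 0)"

definition in_stratum :: "'n set \<Rightarrow> 'n series \<Rightarrow> bool" where
  "in_stratum S F \<longleftrightarrow> (\<forall>y p. valid_mono y \<longrightarrow> active y \<noteq> S \<longrightarrow> F y p = 0)"

definition vanishes_off_valid :: "'n series \<Rightarrow> bool" where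
  "vanishes_off_valid F \<longleftrightarrow> (\<forall>y p. \<not> valid_mono y \<longrightarrow> F y p = 0)"

lemma same_weights_active: "same_weights y x \<Longrightarrow> active y = active x"
  by (simp add: same_weights_def active_def)

lemma weight_change_lambda: "weight j (k', M, T) = weight j (k, M, T)"
  by (simp add: weight_def dhat_indices_def)

lemma active_change_lambda: "active (k', M, T) = active (k, M, T)"
  by (simp add: active_def weight_change_lambda[of _ k' M T k])

lemma valid_mono_change_lambda: "valid_mono (k', M, T) = valid_mono (k, M, T)"
  by (simp add: valid_mono_def)

lemma dhat_zero_fun [simp]: "dhat i (\<lambda>y p. 0) x p = 0"
  by (simp add: dhat_eq)

lemma hhat_zero_fun [simp]: "hhat i (\<lambda>y p. 0) x p = 0"
  by (simp add: hhat_def)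

lemma dhat_zero_at: "(\<And>y. F y p = 0) \<Longrightarrow> dhat i F x p = 0"
  by (simp add: dhat_eq)

lemma dhat_scale_by_weights:
  assumes "valid_mono (k,M,T)" "\<And>y. same_weights y (k,M,T) \<Longrightarrow> \<phi> y = \<phi> (k,M,T)"
  shows "dhat i (\<lambda>y p. \<phi> y * F y p) (k,M,T) p = \<phi> (k,M,T) * dhat i F (k,M,T) p"
proof -
  have "dhat i (\<lambda>y p. \<phi> y * F y p) (k,M,T) p = dhat i (\<lambda>y p. \<phi> (k,M,T) * F y p) (k,M,T) p"
    by (rule dhat_cong_weights[OF assms(1)]) (simp add: assms(2))
  also have "\<dots> = \<phi> (k,M,T) * dhat i F (k,M,T) p"
    by (rule dhat_cmult[of i "\<lambda>_. \<phi> (k,M,T)"])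
  finally show ?thesis .
qed

lemma dhat_eq_zero_if_zero_on_active:
  assumes "valid_mono (k,M,T)" "\<And>y. valid_mono y \<Longrightarrow> active y = active (k,M,T) \<Longrightarrow> F y p = 0"
  shows "dhat i F (k,M,T) p = 0"
proof -
  have "dhat i F (k,M,T) p = dhat i (\<lambda>y p. 0) (k,M,T) p"
    by (rule dhat_cong_weights[OF assms(1)]) (use assms(2) same_weights_active in blast)
  then show ?thesis by simp
qed

lemma dhat_outside_stratum:
  assumes "valid_mono (k,M,T)" "active (k,M,T) \<noteq> S" "in_stratum S F"
  shows "dhat i F (k,M,T) p = 0"
proof (rule dhat_eq_zero_if_zero_on_active[OF assms(1)])
  fix y assume "valid_mono y" "active y = active (k,M,T)"
  then show "F y p = 0" using assms(2,3) unfolding in_stratum_def by blast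
qed

lemma hhat_outside_stratum:
  assumes "valid_mono (k,M,T)" "active (k,M,T) \<noteq> S" "in_stratum S F"
  shows "hhat i F (k,M,T) p = 0"
proof -
  have "hhat i F (k,M,T) p = hhat i (\<lambda>y p. 0) (k,M,T) p"
  proof (rule hhat_cong_weights[OF assms(1)])
    fix y assume "valid_mono y" "same_weights y (k,M,T)"
    then show "F y p = 0" using assms(2,3) same_weights_active unfolding in_stratum_def by metis
  qed
  then show ?thesis by simp
qed

lemma in_stratum_hhat:
  fixes F :: "'n::linorder series"
  assumes "in_stratum S F"
  shows "in_stratum S (hhat i F)"
proof (unfold in_stratum_def, intro allI impI)
  fix y :: "'n mono" and p assume "valid_mono y" "active y \<noteq> S"
  moreover obtain k M T where "y = (k,M,T)" by (cases y)
  ultimately show "hhat i F y p = 0" using hhat_outside_stratum[OF _ _ assms] by simp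
qed

lemma vanishes_off_valid_dhat:
  fixes F :: "'n::{finite,linorder} series"
  assumes "vanishes_off_valid F"
  shows "vanishes_off_valid (dhat i F)"
proof (unfold vanishes_off_valid_def, intro allI impI)
  fix y :: "'n mono" and p assume "\<not> valid_mono y"
  moreover obtain k M T where "y = (k,M,T)" by (cases y)
  ultimately show "dhat i F y p = 0"
    using assms by (auto simp: vanishes_off_valid_def intro!: dhat_invalid)
qed

lemma vanishes_off_valid_hhat:
  fixes F :: "'n::linorder series"
  assumes "vanishes_off_valid F"
  shows "vanishes_off_valid (hhat i F)"
proof (unfold vanishes_off_valid_def, intro allI impI)
  fix y :: "'n mono" and p assume "\<not> valid_mono y"
  moreover obtain k M T where "y = (k,M,T)" by (cases y)
  ultimately show "hhat i F y p = 0"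
    using assms by (auto simp: vanishes_off_valid_def intro!: hhat_invalid)
qed

lemma Delta_eq_sum_active:
  assumes "valid_mono (k,M,T)"
  shows "Delta f F (k,M,T) p
    = (\<Sum>l\<in>active (k,M,T). f l p * mult_u_minus_lambda l (dhat l F) (k,M,T) p)"
  unfolding Delta_eq
proof (rule sum.mono_neutral_right)
  have "finite T" using assms by (simp add: valid_mono_def)
  then show "\<forall>l\<in>UNIV - active (k,M,T). f l p * mult_u_minus_lambda l (dhat l F) (k,M,T) p = 0"
    using weight_change_lambda[of _ "k - 1" M T k]
    by (auto simp: active_def mult_u_minus_lambda_def dhat_weight_zero)
qed auto

lemma dhat_stratum:
  assumes "valid_mono (k,M,T)"
  shows "dhat l (stratum S F) (k,M,T) p = (if active (k,M,T) = S then dhat l F (k,M,T) p else 0)"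
proof -
  have "stratum S F = (\<lambda>y p. (if active y = S then 1 else 0) * F y p)"
    by (auto simp: stratum_def fun_eq_iff)
  moreover have "dhat l (\<lambda>y p. (if active y = S then 1 else 0) * F y p) (k,M,T) p
      = (if active (k,M,T) = S then 1 else 0) * dhat l F (k,M,T) p"
    by (rule dhat_scale_by_weights[OF assms]) (simp add: same_weights_active)
  ultimately show ?thesis by simp
qed

lemma Delta_stratum:
  assumes "valid_mono (k,M,T)"
  shows "Delta f (stratum S F) (k,M,T) p = (if active (k,M,T) = S then Delta f F (k,M,T) p else 0)"
proof -
  have "dhat l (stratum S F) (k',M,T) p = (if active (k,M,T) = S then dhat l F (k',M,T) p else 0)" for l k'
    using dhat_stratum[of k' M T l S F p] valid_mono_change_lambda[of k' M T k]
      active_change_lambda[of k' M T k] assms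
    by simp
  then show ?thesis
    by (cases "active (k,M,T) = S"; cases k) (simp_all add: Delta_eq mult_u_minus_lambda_def)
qed

section \<open>The normalised homotopy and division by u^i - lambda\<close>

definition khat :: "'n::linorder \<Rightarrow> 'n series \<Rightarrow> 'n series" where
  "khat i F x p = hhat i F x p / real (weight i x)"

lemma khat_cmult: "khat i (\<lambda>y p. g p * F y p) x p = g p * khat i F x p"
  by (simp add: khat_def hhat_cmult)

lemma khat_sum: "khat i (\<lambda>y p. \<Sum>j\<in>J. F j y p) x p = (\<Sum>j\<in>J. khat i (F j) x p)"
proof -
  have "hhat i (\<lambda>y p. \<Sum>j\<in>J. F j y p) x p = (\<Sum>j\<in>J. hhat i (F j) x p)"
    by (simp add: hhat_def sum_distrib_left sum.swap[of _ J])
  then show ?thesis by (simp add: khat_def sum_divide_distrib)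
qed

lemma khat_zero_valid:
  assumes "valid_mono (k,M,T)" "\<And>y. valid_mono y \<Longrightarrow> F y p = 0"
  shows "khat m F (k,M,T) p = 0"
proof -
  have "hhat m F (k,M,T) p = hhat m (\<lambda>y p. 0) (k,M,T) p"
    by (rule hhat_cong_weights[OF assms(1)]) (simp add: assms(2))
  then show ?thesis by (simp add: khat_def)
qed

lemma dhat_khat:
  assumes "valid_mono (k,M,T)" "0 < weight m (k,M,T)"
  shows "dhat l (khat m F) (k,M,T) p = (if l = m then F (k,M,T) p else 0) - khat m (dhat l F) (k,M,T) p"
proof -
  have "finite T" using assms(1) by (simp add: valid_mono_def)
  have "khat m F = (\<lambda>y p. (1 / real (weight m y)) * hhat m F y p)"
    by (auto simp: khat_def fun_eq_iff)
  moreover have "dhat l (\<lambda>y p. (1 / real (weight m y)) * hhat m F y p) (k,M,T) p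
      = (1 / real (weight m (k,M,T))) * dhat l (hhat m F) (k,M,T) p"
    by (rule dhat_scale_by_weights[OF assms(1)]) (simp add: same_weights_def)
  moreover have "dhat l (hhat m F) (k,M,T) p
      = (if l = m then real (weight m (k,M,T)) * F (k,M,T) p else 0) - hhat m (dhat l F) (k,M,T) p"
    using dhat_hhat_anticommutator[OF \<open>finite T\<close>, of l m F k M p]
    by (cases "l = m") (simp_all add: algebra_simps)
  ultimately show ?thesis
    using assms(2) by (simp add: khat_def diff_divide_distrib)
qed

lemma dhat_mult_u_minus_lambda:
  "dhat l (mult_u_minus_lambda i F) (k,M,T) p = mult_u_minus_lambda i (dhat l F) (k,M,T) p"
  by (cases k) (simp_all add: dhat_eq mult_u_minus_lambda_def dhat_indices_def sum_subtractf
      sum_distrib_left algebra_simps)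

lemma khat_mult_u_minus_lambda:
  "khat m (mult_u_minus_lambda i F) (k,M,T) p = mult_u_minus_lambda i (khat m F) (k,M,T) p"
proof -
  have "hhat m (mult_u_minus_lambda i F) (k,M,T) p = mult_u_minus_lambda i (hhat m F) (k,M,T) p"
    by (cases k) (simp_all add: hhat_def mult_u_minus_lambda_def hhat_indices_def sum_subtractf
        sum_distrib_left algebra_simps)
  then show ?thesis
    using weight_change_lambda[of m "k - 1" M T k]
    by (simp add: khat_def mult_u_minus_lambda_def diff_divide_distrib)
qed

text \<open>Division with remainder by u^i - lambda of a series of lambda-degree at most N:
  the remainder is the substitution lambda := u^i, the quotient is computed by Horner's scheme.\<close>

definition subst_lambda_u :: "'n::finite \<Rightarrow> nat \<Rightarrow> 'n series \<Rightarrow> 'n series" where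
  "subst_lambda_u i N Y x p = (if mlam x = 0 then (\<Sum>j\<le>N. (p $ i) ^ j * Y (j, mev x, mth x) p) else 0)"

definition div_u_minus_lambda :: "'n::finite \<Rightarrow> nat \<Rightarrow> 'n series \<Rightarrow> 'n series" where
  "div_u_minus_lambda i N Y x p = - (\<Sum>j\<in>{mlam x<..N}. (p $ i) ^ (j - mlam x - 1) * Y (j, mev x, mth x) p)"

lemma horner_quotient_Suc:
  fixes y :: "nat \<Rightarrow> real"
  assumes "\<And>j. N < j \<Longrightarrow> y j = 0"
  shows "u * (- (\<Sum>j\<in>{Suc k<..N}. u ^ (j - Suc k - 1) * y j)) - (- (\<Sum>j\<in>{k<..N}. u ^ (j - k - 1) * y j))
    = y (Suc k)"
proof (cases "Suc k \<le> N")
  case True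
  have "{k<..N} = insert (Suc k) {Suc k<..N}" using True by auto
  then have "(\<Sum>j\<in>{k<..N}. u ^ (j - k - 1) * y j) = y (Suc k) + (\<Sum>j\<in>{Suc k<..N}. u ^ (j - k - 1) * y j)"
    by simp
  moreover have "(\<Sum>j\<in>{Suc k<..N}. u ^ (j - k - 1) * y j) = u * (\<Sum>j\<in>{Suc k<..N}. u ^ (j - Suc k - 1) * y j)"
    unfolding sum_distrib_left
  proof (rule sum.cong[OF refl])
    fix j assume "j \<in> {Suc k<..N}"
    then have "j - k - 1 = Suc (j - Suc k - 1)" by auto
    then show "u ^ (j - k - 1) * y j = u * (u ^ (j - Suc k - 1) * y j)" by simp
  qed
  ultimately show ?thesis by simp
next
  case False
  then show ?thesis using assms[of "Suc k"] by simp
qed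

lemma horner_quotient_0:
  fixes y :: "nat \<Rightarrow> real"
  shows "u * (- (\<Sum>j\<in>{0<..N}. u ^ (j - 0 - 1) * y j)) = y 0 - (\<Sum>j\<le>N. u ^ j * y j)"
proof -
  have "{..N} = insert 0 {0<..N}" by auto
  then have "(\<Sum>j\<le>N. u ^ j * y j) = y 0 + (\<Sum>j\<in>{0<..N}. u ^ j * y j)"
    by simp
  moreover have "(\<Sum>j\<in>{0<..N}. u ^ j * y j) = u * (\<Sum>j\<in>{0<..N}. u ^ (j - 0 - 1) * y j)"
    unfolding sum_distrib_left
  proof (rule sum.cong[OF refl])
    fix j :: nat assume "j \<in> {0<..N}"
    then have "j = Suc (j - 0 - 1)" by auto
    then show "u ^ j * y j = u * (u ^ (j - 0 - 1) * y j)" by (metis mult.assoc power_Suc)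
  qed
  ultimately show ?thesis by simp
qed

lemma mult_div_u_minus_lambda:
  assumes "\<And>j. N < j \<Longrightarrow> Y (j,M,T) p = 0"
  shows "mult_u_minus_lambda i (div_u_minus_lambda i N Y) (k,M,T) p
    = Y (k,M,T) p - subst_lambda_u i N Y (k,M,T) p"
proof (cases k)
  case 0
  then show ?thesis using horner_quotient_0[where u="p $ i" and N=N and y="\<lambda>j. Y (j,M,T) p"]
    by (simp add: mult_u_minus_lambda_def div_u_minus_lambda_def subst_lambda_u_def)
next
  case (Suc k')
  then show ?thesis
    using horner_quotient_Suc[where N=N and y="\<lambda>j. Y (j,M,T) p" and u="p $ i" and k=k'] assms
    by (simp add: mult_u_minus_lambda_def div_u_minus_lambda_def subst_lambda_u_def)
qed

definition smooth_coeffs :: "(real^'n) set \<Rightarrow> 'n series \<Rightarrow> bool" where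
  "smooth_coeffs U F \<longleftrightarrow> (\<forall>x. smooth_on U (F x) \<and> (\<forall>p. p \<notin> U \<longrightarrow> F x p = 0))"

definition lambda_degree_le :: "nat \<Rightarrow> 'n series \<Rightarrow> bool" where
  "lambda_degree_le N F \<longleftrightarrow> (\<forall>x p. N < mlam x \<longrightarrow> F x p = 0)"

lemma Alam_iff:
  "F \<in> Alam U \<longleftrightarrow> smooth_coeffs U F \<and> vanishes_off_valid F \<and> (\<exists>N. lambda_degree_le N F)"
  unfolding Alam_def smooth_coeffs_def vanishes_off_valid_def lambda_degree_le_def by (auto simp: fun_eq_iff)

lemma smooth_coeffs_smooth: "smooth_coeffs U F \<Longrightarrow> smooth_on U (F x)"
  unfolding smooth_coeffs_def by blast

lemma smooth_coeffs_outside: "smooth_coeffs U F \<Longrightarrow> p \<notin> U \<Longrightarrow> F x p = 0"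
  unfolding smooth_coeffs_def by blast

lemma smooth_coeffs_cmult:
  "open U \<Longrightarrow> smooth_on U g \<Longrightarrow> smooth_coeffs U F \<Longrightarrow> smooth_coeffs U (\<lambda>x p. g p * F x p)"
  unfolding smooth_coeffs_def by (auto intro!: smooth_on_mult)

lemma smooth_coeffs_diff:
  "open U \<Longrightarrow> smooth_coeffs U F \<Longrightarrow> smooth_coeffs U G \<Longrightarrow> smooth_coeffs U (\<lambda>x p. F x p - G x p)"
  unfolding smooth_coeffs_def by (auto intro!: smooth_on_diff)

lemma smooth_coeffs_sum:
  "open U \<Longrightarrow> (\<And>j. j \<in> J \<Longrightarrow> smooth_coeffs U (F j)) \<Longrightarrow> smooth_coeffs U (\<lambda>x p. \<Sum>j\<in>J. F j x p)"
  unfolding smooth_coeffs_def by (auto intro!: smooth_on_sum)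

lemma smooth_coeffs_stratum:
  fixes F :: "'n::finite series"
  assumes "open U" "smooth_coeffs U F"
  shows "smooth_coeffs U (stratum S F)"
  unfolding smooth_coeffs_def
proof (intro allI conjI impI)
  fix x :: "'n mono"
  have "stratum S F x = (if active x = S then F x else (\<lambda>p. 0))"
    by (auto simp: stratum_def)
  then show "smooth_on U (stratum S F x)"
    using assms by (simp add: smooth_coeffs_smooth smooth_on_const)
  show "p \<notin> U \<Longrightarrow> stratum S F x p = 0" for p
    using smooth_coeffs_outside[OF assms(2)] by (simp add: stratum_def)
qed

lemma smooth_coeffs_khat:
  fixes F :: "'n::{finite,linorder} series"
  assumes "open U" "smooth_coeffs U F"
  shows "smooth_coeffs U (khat i F)"
  unfolding smooth_coeffs_def
proof (intro allI conjI impI)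
  fix x :: "'n mono"
  obtain k M T where x: "x = (k,M,T)" by (cases x)
  have "smooth_on U (\<lambda>p. (\<Sum>s\<in>hhat_indices i x. koszul_sign T (i,s+1)
      * F (k, M - {#(i,s)#}, insert (i,s+1) T) p) * inverse (real (weight i x)))"
    using assms by (intro smooth_on_sum smooth_on_mult smooth_on_const) (simp_all add: smooth_coeffs_smooth)
  then show "smooth_on U (khat i F x)"
    by (simp add: x khat_def[abs_def] hhat_def divide_inverse)
  show "p \<notin> U \<Longrightarrow> khat i F x p = 0" for p
    using smooth_coeffs_outside[OF assms(2)] by (simp add: khat_def hhat_def)
qed

lemma smooth_coeffs_subst_lambda_u:
  fixes Y :: "'n::finite series"
  assumes "open U" "smooth_coeffs U Y"
  shows "smooth_coeffs U (subst_lambda_u i N Y)"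
  unfolding smooth_coeffs_def
proof (intro allI conjI impI)
  fix x :: "'n mono"
  have "smooth_on U (\<lambda>p. \<Sum>j\<le>N. (p $ i) ^ j * Y (j, mev x, mth x) p)"
    using assms by (intro smooth_on_sum smooth_on_mult smooth_on_power smooth_on_component)
      (simp_all add: smooth_coeffs_smooth)
  then show "smooth_on U (subst_lambda_u i N Y x)"
    using assms(1) by (cases "mlam x = 0") (simp_all add: subst_lambda_u_def[abs_def] smooth_on_const)
  show "p \<notin> U \<Longrightarrow> subst_lambda_u i N Y x p = 0" for p
    using smooth_coeffs_outside[OF assms(2)] by (simp add: subst_lambda_u_def)
qed

lemma smooth_coeffs_div_u_minus_lambda:
  fixes Y :: "'n::finite series"
  assumes "open U" "smooth_coeffs U Y"
  shows "smooth_coeffs U (div_u_minus_lambda i N Y)"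
  unfolding smooth_coeffs_def
proof (intro allI conjI impI)
  fix x :: "'n mono"
  have "smooth_on U (\<lambda>p. - (\<Sum>j\<in>{mlam x<..N}. (p $ i) ^ (j - mlam x - 1) * Y (j, mev x, mth x) p))"
    using assms by (intro smooth_on_minus smooth_on_sum smooth_on_mult smooth_on_power smooth_on_component)
      (simp_all add: smooth_coeffs_smooth)
  then show "smooth_on U (div_u_minus_lambda i N Y x)"
    by (simp add: div_u_minus_lambda_def[abs_def])
  show "p \<notin> U \<Longrightarrow> div_u_minus_lambda i N Y x p = 0" for p
    using smooth_coeffs_outside[OF assms(2)] by (simp add: div_u_minus_lambda_def)
qed

lemma vanishes_off_valid_cmult: "vanishes_off_valid F \<Longrightarrow> vanishes_off_valid (\<lambda>y p. g p * F y p)"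
  by (simp add: vanishes_off_valid_def)

lemma vanishes_off_valid_diff:
  "vanishes_off_valid F \<Longrightarrow> vanishes_off_valid G \<Longrightarrow> vanishes_off_valid (\<lambda>y p. F y p - G y p)"
  by (simp add: vanishes_off_valid_def)

lemma vanishes_off_valid_sum:
  "(\<And>j. j \<in> J \<Longrightarrow> vanishes_off_valid (F j)) \<Longrightarrow> vanishes_off_valid (\<lambda>y p. \<Sum>j\<in>J. F j y p)"
  by (simp add: vanishes_off_valid_def)

lemma vanishes_off_valid_stratum: "vanishes_off_valid F \<Longrightarrow> vanishes_off_valid (stratum S F)"
  by (simp add: vanishes_off_valid_def stratum_def)

lemma vanishes_off_valid_khat: "vanishes_off_valid F \<Longrightarrow> vanishes_off_valid (khat i F)"
  using vanishes_off_valid_hhat[of F i] by (simp add: vanishes_off_valid_def khat_def)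

lemma vanishes_off_valid_subst_lambda_u:
  "vanishes_off_valid Y \<Longrightarrow> vanishes_off_valid (subst_lambda_u i N Y)"
  by (simp add: vanishes_off_valid_def subst_lambda_u_def valid_mono_def)

lemma vanishes_off_valid_div_u_minus_lambda:
  "vanishes_off_valid Y \<Longrightarrow> vanishes_off_valid (div_u_minus_lambda i N Y)"
  by (simp add: vanishes_off_valid_def div_u_minus_lambda_def valid_mono_def)

lemma in_stratum_cmult: "in_stratum S F \<Longrightarrow> in_stratum S (\<lambda>y p. g p * F y p)"
  by (simp add: in_stratum_def)

lemma in_stratum_diff: "in_stratum S F \<Longrightarrow> in_stratum S G \<Longrightarrow> in_stratum S (\<lambda>y p. F y p - G y p)"
  by (simp add: in_stratum_def)

lemma in_stratum_stratum: "in_stratum S (stratum S F)"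
  by (simp add: in_stratum_def stratum_def)

lemma in_stratum_khat: "in_stratum S F \<Longrightarrow> in_stratum S (khat i F)"
  using in_stratum_hhat[of S F i] by (simp add: in_stratum_def khat_def)

lemma active_replace_lambda: "active (j, mev x, mth x) = active x"
  by (cases x) (simp add: active_change_lambda)

lemma in_stratum_replace_lambda:
  "in_stratum S Y \<Longrightarrow> valid_mono x \<Longrightarrow> active x \<noteq> S \<Longrightarrow> Y (j, mev x, mth x) p = 0"
  unfolding in_stratum_def by (metis valid_mono_def mono_selectors active_replace_lambda)

lemma in_stratum_subst_lambda_u:
  fixes Y :: "'n::finite series"
  assumes "in_stratum S Y"
  shows "in_stratum S (subst_lambda_u i N Y)"
proof (unfold in_stratum_def, intro allI impI)
  fix y :: "'n mono" and p assume "valid_mono y" "active y \<noteq> S"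
  then have "Y (j, mev y, mth y) p = 0" for j by (rule in_stratum_replace_lambda[OF assms])
  then show "subst_lambda_u i N Y y p = 0" by (simp add: subst_lambda_u_def)
qed

lemma in_stratum_div_u_minus_lambda:
  fixes Y :: "'n::finite series"
  assumes "in_stratum S Y"
  shows "in_stratum S (div_u_minus_lambda i N Y)"
proof (unfold in_stratum_def, intro allI impI)
  fix y :: "'n mono" and p assume "valid_mono y" "active y \<noteq> S"
  then have "Y (j, mev y, mth y) p = 0" for j by (rule in_stratum_replace_lambda[OF assms])
  then show "div_u_minus_lambda i N Y y p = 0" by (simp add: div_u_minus_lambda_def)
qed

lemma lambda_degree_le_cmult: "lambda_degree_le N F \<Longrightarrow> lambda_degree_le N (\<lambda>y p. g p * F y p)"
  by (simp add: lambda_degree_le_def)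

lemma lambda_degree_le_diff:
  "lambda_degree_le N F \<Longrightarrow> lambda_degree_le N G \<Longrightarrow> lambda_degree_le N (\<lambda>y p. F y p - G y p)"
  by (simp add: lambda_degree_le_def)

lemma lambda_degree_le_sum:
  "(\<And>j. j \<in> J \<Longrightarrow> lambda_degree_le N (F j)) \<Longrightarrow> lambda_degree_le N (\<lambda>y p. \<Sum>j\<in>J. F j y p)"
  by (simp add: lambda_degree_le_def)

lemma lambda_degree_le_stratum: "lambda_degree_le N F \<Longrightarrow> lambda_degree_le N (stratum S F)"
  by (simp add: lambda_degree_le_def stratum_def)

lemma lambda_degree_le_dhat: "lambda_degree_le N F \<Longrightarrow> lambda_degree_le N (dhat i F)"
  by (simp add: lambda_degree_le_def dhat_eq)

lemma lambda_degree_le_khat: "lambda_degree_le N F \<Longrightarrow> lambda_degree_le N (khat i F)"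
  by (simp add: lambda_degree_le_def khat_def hhat_def)

lemma lambda_degree_le_subst_lambda_u: "lambda_degree_le 0 (subst_lambda_u i N Y)"
  by (simp add: lambda_degree_le_def subst_lambda_u_def)

lemma lambda_degree_le_div_u_minus_lambda: "lambda_degree_le N (div_u_minus_lambda i N Y)"
  by (simp add: lambda_degree_le_def div_u_minus_lambda_def)

lemma active_subset_iff:
  assumes "valid_mono x"
  shows "active x \<subseteq> S \<longleftrightarrow> (\<forall>v\<in>#mev x. fst v \<in> S) \<and> (\<forall>v\<in>mth x. 2 \<le> snd v \<longrightarrow> fst v \<in> S)"
proof -
  have fin: "finite (dhat_indices j x)" for j
    by (rule finite_dhat_indices) (use assms in \<open>simp add: valid_mono_def\<close>)
  have ev: "filter_mset (\<lambda>v. fst v = j \<and> 1 \<le> snd v) (mev x) = {#} \<longleftrightarrow> (\<forall>v\<in>#mev x. fst v \<noteq> j)" for j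
    using assms by (auto simp: valid_mono_def filter_mset_eq_mempty_iff)
  have odd: "dhat_indices j x = {} \<longleftrightarrow> (\<forall>v\<in>mth x. 2 \<le> snd v \<longrightarrow> fst v \<noteq> j)" for j
  proof
    assume empty: "dhat_indices j x = {}"
    show "\<forall>v\<in>mth x. 2 \<le> snd v \<longrightarrow> fst v \<noteq> j"
    proof (intro ballI impI notI)
      fix v assume "v \<in> mth x" "2 \<le> snd v" "fst v = j"
      then have "snd v - 1 \<in> dhat_indices j x" by (cases v) (auto simp: dhat_indices_def)
      then show False using empty by simp
    qed
  qed (force simp: dhat_indices_def)
  have "j \<notin> active x \<longleftrightarrow> (\<forall>v\<in>#mev x. fst v \<noteq> j) \<and> (\<forall>v\<in>mth x. 2 \<le> snd v \<longrightarrow> fst v \<noteq> j)" for j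
    using fin[of j] ev[of j] odd[of j] by (simp add: active_def weight_def)
  then show ?thesis by blast
qed

lemma valid_mono_of_nonzero: "F \<in> Alam U \<Longrightarrow> F x p \<noteq> 0 \<Longrightarrow> valid_mono x"
  unfolding Alam_iff vanishes_off_valid_def by blast

lemma Clam_iff:
  fixes c :: "'n::{finite,linorder} series"
  shows "c \<in> Clam U \<longleftrightarrow> c \<in> Alam U \<and> (\<forall>x p. c x p \<noteq> 0 \<longrightarrow> active x = {})"
proof -
  have iff: "mev x = {#} \<and> mth x \<subseteq> {v. snd v \<le> 1} \<longleftrightarrow> active x = {}"
    if "valid_mono x" for x :: "'n mono"
    using active_subset_iff[OF that, of "{}"] by (auto simp: not_le simp flip: set_mset_eq_empty_iff)
  show ?thesis
  proof
    assume "c \<in> Clam U"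
    then have c: "c \<in> Alam U" "\<And>x. c x \<noteq> (\<lambda>p. 0) \<Longrightarrow> mev x = {#} \<and> mth x \<subseteq> {v. snd v \<le> 1}"
      unfolding Clam_def by blast+
    have "active x = {}" if "c x p \<noteq> 0" for x p
    proof -
      have "c x \<noteq> (\<lambda>p. 0)" using that by auto
      then show ?thesis using c(2) iff[OF valid_mono_of_nonzero[OF c(1) that]] by blast
    qed
    with c(1) show "c \<in> Alam U \<and> (\<forall>x p. c x p \<noteq> 0 \<longrightarrow> active x = {})" by blast
  next
    assume c: "c \<in> Alam U \<and> (\<forall>x p. c x p \<noteq> 0 \<longrightarrow> active x = {})"
    have "mev x = {#} \<and> mth x \<subseteq> {v. snd v \<le> 1}" if nz: "c x \<noteq> (\<lambda>p. 0)" for x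
    proof -
      obtain p where p: "c x p \<noteq> 0" using nz by (metis ext)
      then have "active x = {}" using c by blast
      then show ?thesis using iff[OF valid_mono_of_nonzero[OF conjunct1[OF c] p]] by blast
    qed
    with c show "c \<in> Clam U" unfolding Clam_def by blast
  qed
qed

lemma Ci_iff:
  fixes a :: "'n::{finite,linorder} series"
  shows "a \<in> Ci U i \<longleftrightarrow> a \<in> Alam U \<and> (\<forall>x p. a x p \<noteq> 0 \<longrightarrow> mlam x = 0 \<and> active x \<subseteq> {i})"
proof -
  have iff: "(\<forall>v\<in>#mev x. fst v = i) \<and> mth x \<subseteq> {v. snd v \<le> 1} \<union> {v. fst v = i \<and> 2 \<le> snd v}
      \<longleftrightarrow> active x \<subseteq> {i}" if "valid_mono x" for x :: "'n mono"
    using active_subset_iff[OF that, of "{i}"] by (auto simp: not_le)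
  show ?thesis
  proof
    assume "a \<in> Ci U i"
    then have a: "a \<in> Alam U" "\<And>x. a x \<noteq> (\<lambda>p. 0) \<Longrightarrow> mlam x = 0 \<and> (\<forall>v\<in>#mev x. fst v = i)
        \<and> mth x \<subseteq> {v. snd v \<le> 1} \<union> {v. fst v = i \<and> 2 \<le> snd v}"
      unfolding Ci_def by blast+
    have "mlam x = 0 \<and> active x \<subseteq> {i}" if "a x p \<noteq> 0" for x p
    proof -
      have "a x \<noteq> (\<lambda>p. 0)" using that by auto
      then show ?thesis using a(2) iff[OF valid_mono_of_nonzero[OF a(1) that]] by blast
    qed
    with a(1) show "a \<in> Alam U \<and> (\<forall>x p. a x p \<noteq> 0 \<longrightarrow> mlam x = 0 \<and> active x \<subseteq> {i})" by blast
  next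
    assume a: "a \<in> Alam U \<and> (\<forall>x p. a x p \<noteq> 0 \<longrightarrow> mlam x = 0 \<and> active x \<subseteq> {i})"
    have "mlam x = 0 \<and> (\<forall>v\<in>#mev x. fst v = i) \<and> mth x \<subseteq> {v. snd v \<le> 1} \<union> {v. fst v = i \<and> 2 \<le> snd v}"
      if nz: "a x \<noteq> (\<lambda>p. 0)" for x
    proof -
      obtain p where p: "a x p \<noteq> 0" using nz by (metis ext)
      then have "mlam x = 0 \<and> active x \<subseteq> {i}" using a by blast
      then show ?thesis using iff[OF valid_mono_of_nonzero[OF conjunct1[OF a] p]] by blast
    qed
    with a show "a \<in> Ci U i" unfolding Ci_def by blast
  qed
qed

lemma in_Clam_if_in_stratum:
  fixes c :: "'n::{finite,linorder} series"
  assumes "c \<in> Alam U" "in_stratum {} c"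
  shows "c \<in> Clam U"
proof (unfold Clam_iff, intro conjI allI impI assms(1))
  fix x p assume nz: "c x p \<noteq> 0"
  then show "active x = {}"
    using assms(2) valid_mono_of_nonzero[OF assms(1) nz] unfolding in_stratum_def by blast
qed

lemma in_Ci_if_in_stratum:
  fixes a :: "'n::{finite,linorder} series"
  assumes "a \<in> Alam U" "lambda_degree_le 0 a" "in_stratum {i} a"
  shows "a \<in> Ci U i"
proof (unfold Ci_iff, intro conjI allI impI assms(1))
  fix x p assume nz: "a x p \<noteq> 0"
  show "mlam x = 0" using assms(2) nz unfolding lambda_degree_le_def by (metis gr0I)
  have "active x = {i}"
    using assms(3) valid_mono_of_nonzero[OF assms(1) nz] nz unfolding in_stratum_def by blast
  then show "active x \<subseteq> {i}" by simp
qed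

lemma Delta_Clam:
  fixes c :: "'n::{finite,linorder} series"
  assumes "c \<in> Clam U"
  shows "Delta f c = (\<lambda>x p. 0)"
proof -
  have "c (k, add_mset v M, T) q = 0" for k v M T q
  proof (rule ccontr)
    assume "c (k, add_mset v M, T) q \<noteq> 0"
    then have "c (k, add_mset v M, T) \<noteq> (\<lambda>p. 0)" by auto
    then have "mev (k, add_mset v M, T) = {#}" using assms unfolding Clam_def by blast
    then show False by simp
  qed
  then have "dhat i c x p = 0" for i x p by (simp add: dhat_eq)
  then show ?thesis by (simp add: fun_eq_iff Delta_eq_zero_if_dhat_zero)
qed

lemma dhat_Ci_outside:
  fixes a :: "'n::{finite,linorder} series"
  assumes "a \<in> Ci U i" "valid_mono (k,M,T)" "\<not> active (k,M,T) \<subseteq> {i}"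
  shows "dhat l a (k,M,T) p = 0"
proof (rule dhat_eq_zero_if_zero_on_active[OF assms(2)])
  fix y assume "valid_mono y" "active y = active (k,M,T)"
  then show "a y p = 0" using assms(1,3) unfolding Ci_iff by blast
qed

lemma dhat_Ci_not_singleton:
  fixes a :: "'n::{finite,linorder} series"
  assumes "a \<in> Ci U i" "valid_mono (k,M,T)" "active (k,M,T) \<noteq> {i}"
  shows "dhat i a (k,M,T) p = 0"
proof (cases "active (k,M,T) = {}")
  case True
  moreover have "finite T" using assms(2) by (simp add: valid_mono_def)
  ultimately show ?thesis using dhat_weight_zero[of T i k M a p] by (auto simp: active_def)
next
  case False
  then show ?thesis using assms dhat_Ci_outside by blast
qed

lemma dhat_Ci_lambda:
  fixes a :: "'n::{finite,linorder} series"
  assumes "a \<in> Ci U i" "k \<noteq> 0"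
  shows "dhat l a (k,M,T) p = 0"
proof -
  have "a (k, M', T') q = 0" for M' T' q
    using assms unfolding Ci_iff by (metis mono_selectors(1))
  then show ?thesis by (simp add: dhat_eq)
qed

lemma Delta_dhat_Ci:
  fixes a :: "'n::{finite,linorder} series"
  assumes "a \<in> Ci U i"
  shows "Delta f (dhat i a) = (\<lambda>x p. 0)"
proof -
  have "dhat l (dhat i a) (k,M,T) p = 0" for l k M T p
  proof (cases "valid_mono (k,M,T)")
    case False
    moreover have "vanishes_off_valid (dhat l (dhat i a))"
      using assms by (intro vanishes_off_valid_dhat) (simp add: Ci_iff Alam_iff)
    ultimately show ?thesis by (simp add: vanishes_off_valid_def)
  next
    case valid: True
    then have "finite T" by (simp add: valid_mono_def)
    consider "l = i" | "l \<noteq> i" "l \<notin> active (k,M,T)" | "l \<noteq> i" "l \<in> active (k,M,T)" by blast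
    then show ?thesis
    proof cases
      case 1
      then show ?thesis using dhat_dhat_zero[OF \<open>finite T\<close>] by simp
    next
      case 2
      then show ?thesis using dhat_weight_zero[OF \<open>finite T\<close>] by (simp add: active_def)
    next
      case 3
      show ?thesis
      proof (rule dhat_eq_zero_if_zero_on_active[OF valid])
        fix y :: "'n mono" assume y: "valid_mono y" "active y = active (k,M,T)"
        obtain k' M' T' where "y = (k',M',T')" by (cases y)
        moreover have "\<not> active y \<subseteq> {i}" using y(2) 3 by auto
        ultimately show "dhat i a y p = 0" using dhat_Ci_outside[OF assms] y(1) by simp
      qed
    qed
  qed
  then have "dhat l (dhat i a) y p = 0" for l y p by (cases y) simp
  then show ?thesis by (simp add: fun_eq_iff Delta_eq_zero_if_dhat_zero)
qed

lemma Clam_part_zero_if_exact: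
  fixes c :: "'n::{finite,linorder} series"
  assumes "c \<in> Clam U" "\<And>i. a i \<in> Ci U i"
    and "\<And>x p. c x p + (\<Sum>i\<in>UNIV. dhat i (a i) x p) = Delta f B x p"
  shows "c x p = 0"
proof (rule ccontr)
  assume nz: "c x p \<noteq> 0"
  obtain k M T where x: "x = (k,M,T)" by (cases x)
  have "c \<in> Alam U" using assms(1) by (simp add: Clam_iff)
  then have valid: "valid_mono (k,M,T)" using valid_mono_of_nonzero nz by (simp add: x)
  have empty: "active (k,M,T) = {}" using assms(1) nz unfolding x Clam_iff by blast
  have "dhat i (a i) (k,M,T) p = 0" for i
    using dhat_Ci_not_singleton[OF assms(2) valid] empty by simp
  moreover have "Delta f B (k,M,T) p = 0"
    using valid empty by (simp add: Delta_eq_sum_active)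
  ultimately show False using assms(3)[of x p] nz by (simp add: x)
qed

section \<open>Exactness on a single stratum\<close>

lemma backward_recurrence_zero:
  fixes W :: "nat \<Rightarrow> real"
  assumes "\<And>k. N < k \<Longrightarrow> W k = 0" "\<And>k. W k = u * W (Suc k)"
  shows "W k = 0"
proof (induction "N - k" arbitrary: k)
  case 0
  then have "W (Suc k) = 0" using assms(1) by simp
  then show ?case using assms(2)[of k] by simp
next
  case (Suc d)
  then have "W (Suc k) = 0" using Suc.hyps(1)[of "Suc k"] by simp
  then show ?case using assms(2)[of k] by simp
qed

lemma dhat_zero_if_Delta_zero_Suc:
  assumes "valid_mono (k,M,T)" "active (k,M,T) = {i}" "f i p \<noteq> 0" "lambda_degree_le N F"
    and "\<And>j. Delta f F (Suc j, M, T) p = 0"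
  shows "dhat i F (k,M,T) p = 0"
proof -
  define W where "W j = dhat i F (j,M,T) p" for j
  have "W j = 0" if "N < j" for j
    using lambda_degree_le_dhat[OF assms(4), of i] that unfolding lambda_degree_le_def W_def by simp
  moreover have "W j = p $ i * W (Suc j)" for j
  proof -
    have "valid_mono (Suc j, M, T)" "active (Suc j, M, T) = {i}"
      using assms(1,2) valid_mono_change_lambda[of "Suc j" M T k] active_change_lambda[of "Suc j" M T k]
      by simp_all
    then have "Delta f F (Suc j, M, T) p = f i p * (p $ i * W (Suc j) - W j)"
      by (simp add: Delta_eq_sum_active mult_u_minus_lambda_def W_def)
    then show ?thesis using assms(3,5) by simp
  qed
  ultimately have "W k = 0" by (rule backward_recurrence_zero)
  then show ?thesis by (simp add: W_def)
qed

lemma dhat_cong_at: "(\<And>y. F y p = G y p) \<Longrightarrow> dhat i F x p = dhat i G x p"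
  by (simp add: dhat_eq)

lemma Delta_div_khat_singleton:
  assumes "valid_mono (k,M,T)" "active (k,M,T) = {i}" "f i p \<noteq> 0"
    and "\<And>y. valid_mono y \<Longrightarrow> dhat i P y p = 0"
    and "\<And>j M T. N < j \<Longrightarrow> khat i P (j,M,T) p = 0"
  shows "f i p * mult_u_minus_lambda i (dhat i (\<lambda>y p. inverse (f i p) * div_u_minus_lambda i N (khat i P) y p)) (k,M,T) p
    = P (k,M,T) p - dhat i (subst_lambda_u i N (khat i P)) (k,M,T) p"
proof -
  let ?Y = "khat i P"
  have "mult_u_minus_lambda i (dhat i (\<lambda>y p. inverse (f i p) * div_u_minus_lambda i N ?Y y p)) (k,M,T) p
      = inverse (f i p) * mult_u_minus_lambda i (dhat i (div_u_minus_lambda i N ?Y)) (k,M,T) p"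
    by (simp add: mult_u_minus_lambda_def dhat_cmult algebra_simps)
  then have "f i p * mult_u_minus_lambda i (dhat i (\<lambda>y p. inverse (f i p) * div_u_minus_lambda i N ?Y y p)) (k,M,T) p
      = mult_u_minus_lambda i (dhat i (div_u_minus_lambda i N ?Y)) (k,M,T) p"
    using assms(3) by simp
  also have "\<dots> = dhat i (mult_u_minus_lambda i (div_u_minus_lambda i N ?Y)) (k,M,T) p"
    by (rule dhat_mult_u_minus_lambda[symmetric])
  also have "\<dots> = dhat i (\<lambda>y p. ?Y y p - subst_lambda_u i N ?Y y p) (k,M,T) p"
  proof (rule dhat_cong_at)
    fix y :: "'a mono"
    obtain k' M' T' where "y = (k',M',T')" by (cases y)
    then show "mult_u_minus_lambda i (div_u_minus_lambda i N ?Y) y p = ?Y y p - subst_lambda_u i N ?Y y p"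
      using mult_div_u_minus_lambda[of N ?Y M' T' p i k'] assms(5) by simp
  qed
  also have "\<dots> = dhat i ?Y (k,M,T) p - dhat i (subst_lambda_u i N ?Y) (k,M,T) p"
    by (rule dhat_diff)
  also have "dhat i ?Y (k,M,T) p = P (k,M,T) p"
  proof -
    have "0 < weight i (k,M,T)" using assms(2) by (auto simp: active_def)
    then have "dhat i ?Y (k,M,T) p = P (k,M,T) p - khat i (dhat i P) (k,M,T) p"
      using dhat_khat[OF assms(1)] by simp
    moreover have "khat i (dhat i P) (k,M,T) p = 0"
      by (rule khat_zero_valid[OF assms(1)]) (rule assms(4))
    ultimately show ?thesis by simp
  qed
  finally show ?thesis .
qed

lemma sum_mult_khat_dhat_zero:
  assumes "valid_mono (k,M,T)" "\<And>y. valid_mono y \<Longrightarrow> Delta f P y p = 0"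
  shows "(\<Sum>l\<in>UNIV. f l p * mult_u_minus_lambda l (khat m (dhat l P)) (k,M,T) p) = 0"
proof -
  have "(\<Sum>l\<in>UNIV. f l p * mult_u_minus_lambda l (khat m (dhat l P)) (k,M,T) p)
      = (\<Sum>l\<in>UNIV. khat m (\<lambda>y p. f l p * mult_u_minus_lambda l (dhat l P) y p) (k,M,T) p)"
    by (simp add: khat_cmult khat_mult_u_minus_lambda)
  also have "\<dots> = khat m (\<lambda>y p. \<Sum>l\<in>UNIV. f l p * mult_u_minus_lambda l (dhat l P) y p) (k,M,T) p"
    by (rule khat_sum[symmetric])
  also have "\<dots> = khat m (Delta f P) (k,M,T) p"
    by (simp add: Delta_eq[abs_def])
  also have "\<dots> = 0"
    by (rule khat_zero_valid[OF assms(1)]) (rule assms(2))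
  finally show ?thesis .
qed

lemma Delta_khat_pair:
  assumes "valid_mono (k,M,T)" "m1 \<in> active (k,M,T)" "m2 \<in> active (k,M,T)"
    and "\<And>y. valid_mono y \<Longrightarrow> Delta f P y p = 0"
  shows "Delta f (\<lambda>y p. c1 p * khat m1 P y p - c2 p * khat m2 P y p) (k,M,T) p
    = c1 p * f m1 p * mult_u_minus_lambda m1 P (k,M,T) p - c2 p * f m2 p * mult_u_minus_lambda m2 P (k,M,T) p"
proof -
  let ?R = "\<lambda>l y p. c1 p * ((if l = m1 then P y p else 0) - khat m1 (dhat l P) y p)
    - c2 p * ((if l = m2 then P y p else 0) - khat m2 (dhat l P) y p)"
  have dhat_pair: "dhat l (\<lambda>y p. c1 p * khat m1 P y p - c2 p * khat m2 P y p) (k',M,T) p = ?R l (k',M,T) p"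
    for l k'
  proof -
    have "valid_mono (k',M,T)" "0 < weight m1 (k',M,T)" "0 < weight m2 (k',M,T)"
      using assms(1-3) valid_mono_change_lambda[of k' M T k] weight_change_lambda[of _ k' M T k]
      by (auto simp: active_def)
    then show ?thesis by (simp add: dhat_diff dhat_cmult dhat_khat)
  qed
  let ?X = "\<lambda>l. f l p * mult_u_minus_lambda l P (k,M,T) p"
  let ?B = "\<lambda>m l. f l p * mult_u_minus_lambda l (khat m (dhat l P)) (k,M,T) p"
  have "Delta f (\<lambda>y p. c1 p * khat m1 P y p - c2 p * khat m2 P y p) (k,M,T) p
      = (\<Sum>l\<in>UNIV. c1 p * ((if l = m1 then ?X l else 0) - ?B m1 l) - c2 p * ((if l = m2 then ?X l else 0) - ?B m2 l))"
    unfolding Delta_eq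
    by (intro sum.cong refl, cases k) (simp_all add: dhat_pair mult_u_minus_lambda_def algebra_simps)
  also have "\<dots> = c1 p * (\<Sum>l\<in>UNIV. (if l = m1 then ?X l else 0) - ?B m1 l)
      - c2 p * (\<Sum>l\<in>UNIV. (if l = m2 then ?X l else 0) - ?B m2 l)"
    by (simp only: sum_subtractf flip: sum_distrib_left)
  also have "(\<Sum>l\<in>UNIV. (if l = m1 then ?X l else 0) - ?B m1 l) = ?X m1 - (\<Sum>l\<in>UNIV. ?B m1 l)"
    by (simp only: sum_subtractf) simp
  also have "(\<Sum>l\<in>UNIV. (if l = m2 then ?X l else 0) - ?B m2 l) = ?X m2 - (\<Sum>l\<in>UNIV. ?B m2 l)"
    by (simp only: sum_subtractf) simp
  finally show ?thesis
    using sum_mult_khat_dhat_zero[OF assms(1,4)] by (simp add: mult.assoc)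
qed

lemma inverse_weights_combination:
  fixes u1 u2 f1 f2 z t :: real
  assumes "u1 \<noteq> u2" "f1 \<noteq> 0" "f2 \<noteq> 0"
  shows "inverse ((u1 - u2) * f1) * f1 * (u1 * z - t) - inverse ((u1 - u2) * f2) * f2 * (u2 * z - t) = z"
proof -
  have f: "inverse ((u1 - u2) * f1) * f1 = inverse (u1 - u2)" "inverse ((u1 - u2) * f2) * f2 = inverse (u1 - u2)"
    using assms(2,3) by (simp_all add: inverse_mult_distrib)
  have "inverse (u1 - u2) * (u1 * z - t) - inverse (u1 - u2) * (u2 * z - t) = inverse (u1 - u2) * ((u1 - u2) * z)"
    by (simp add: algebra_simps)
  then show ?thesis unfolding f using assms(1) by simp
qed

section \<open>Decomposition of a cocycle\<close>

lemma sum_UNIV_eq_single: "(\<And>j. j \<noteq> i \<Longrightarrow> g j = 0) \<Longrightarrow> (\<Sum>j\<in>(UNIV::'a::finite set). g j) = g i"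
  by (subst sum.mono_neutral_right[of UNIV "{i}"]) auto

lemma Min_ne_Max_if_two_le_card:
  assumes "finite S" "2 \<le> card S"
  shows "Min S \<noteq> Max S"
proof
  assume eq: "Min S = Max S"
  have "S \<noteq> {}" using assms(2) by auto
  then have "\<forall>a\<in>S. \<forall>b\<in>S. a = b"
    using eq assms(1) by (metis Max_ge Min_le antisym)
  then have "card S \<le> Suc 0" using card_le_Suc0_iff_eq[OF assms(1)] by blast
  then show False using assms(2) by simp
qed

lemma Delta_sum_strata:
  assumes "valid_mono (k,M,T)" "\<And>S. in_stratum S (F S)"
  shows "Delta f (\<lambda>y p. \<Sum>S\<in>UNIV. F S y p) (k,M,T) p = Delta f (F (active (k,M,T))) (k,M,T) p"
proof -
  have "dhat l (\<lambda>y p. \<Sum>S\<in>UNIV. F S y p) (k',M,T) p = dhat l (F (active (k,M,T))) (k',M,T) p" for l k'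
  proof -
    have "valid_mono (k',M,T)" "active (k',M,T) = active (k,M,T)"
      using assms(1) valid_mono_change_lambda[of k' M T k] active_change_lambda[of k' M T k] by simp_all
    then show ?thesis
      unfolding dhat_sum using dhat_outside_stratum[OF _ _ assms(2)]
      by (intro sum_UNIV_eq_single) auto
  qed
  then show ?thesis by (cases k) (simp_all add: Delta_eq mult_u_minus_lambda_def)
qed

lemma Delta_active_empty: "valid_mono (k,M,T) \<Longrightarrow> active (k,M,T) = {} \<Longrightarrow> Delta f F (k,M,T) p = 0"
  by (simp add: Delta_eq_sum_active)

lemma Delta_invalid:
  assumes "vanishes_off_valid F" "\<not> valid_mono (k,M,T)"
  shows "Delta f F (k,M,T) p = 0"
proof -
  have "\<not> valid_mono (k',M,T)" for k' using assms(2) valid_mono_change_lambda by blast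
  then have "dhat l F (k',M,T) p = 0" for l k'
    using vanishes_off_valid_dhat[OF assms(1)] by (simp add: vanishes_off_valid_def)
  then show ?thesis by (cases k) (simp_all add: Delta_eq mult_u_minus_lambda_def)
qed

definition Clam_component :: "'n series \<Rightarrow> 'n series" where
  "Clam_component Z = stratum {} Z"

definition Ci_component :: "nat \<Rightarrow> 'n::{finite,linorder} series \<Rightarrow> 'n \<Rightarrow> 'n series" where
  "Ci_component N Z i = subst_lambda_u i N (khat i (stratum {i} Z))"

definition singleton_primitive ::
    "('n::{finite,linorder} \<Rightarrow> (real,'n) vec \<Rightarrow> real) \<Rightarrow> nat \<Rightarrow> 'n series \<Rightarrow> 'n \<Rightarrow> 'n series" where
  "singleton_primitive f N Z i y p = inverse (f i p) * div_u_minus_lambda i N (khat i (stratum {i} Z)) y p"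

text \<open>Min S and Max S are just a canonical choice of two distinct active indices.\<close>

definition mixed_primitive ::
    "('n::{finite,linorder} \<Rightarrow> (real,'n) vec \<Rightarrow> real) \<Rightarrow> 'n series \<Rightarrow> 'n set \<Rightarrow> 'n series" where
  "mixed_primitive f Z S y p =
     inverse ((p $ Min S - p $ Max S) * f (Min S) p) * khat (Min S) (stratum S Z) y p
     - inverse ((p $ Min S - p $ Max S) * f (Max S) p) * khat (Max S) (stratum S Z) y p"

definition stratum_primitive ::
    "('n::{finite,linorder} \<Rightarrow> (real,'n) vec \<Rightarrow> real) \<Rightarrow> nat \<Rightarrow> 'n series \<Rightarrow> 'n set \<Rightarrow> 'n series" where
  "stratum_primitive f N Z S =
     (if card S = 1 then singleton_primitive f N Z (the_elem S)
      else if 2 \<le> card S then mixed_primitive f Z S else (\<lambda>y p. 0))"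

definition Delta_primitive ::
    "('n::{finite,linorder} \<Rightarrow> (real,'n) vec \<Rightarrow> real) \<Rightarrow> nat \<Rightarrow> 'n series \<Rightarrow> 'n series" where
  "Delta_primitive f N Z y p = (\<Sum>S\<in>UNIV. stratum_primitive f N Z S y p)"

lemma in_stratum_stratum_primitive: "in_stratum S (stratum_primitive f N Z S)"
proof -
  have "in_stratum {i} (singleton_primitive f N Z i)" for i
    unfolding singleton_primitive_def[abs_def]
    by (intro in_stratum_cmult in_stratum_div_u_minus_lambda in_stratum_khat in_stratum_stratum)
  moreover have "in_stratum S (mixed_primitive f Z S)"
    unfolding mixed_primitive_def[abs_def]
    by (intro in_stratum_diff in_stratum_cmult in_stratum_khat in_stratum_stratum)
  moreover have "in_stratum S (\<lambda>y p. 0)" by (simp add: in_stratum_def)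
  ultimately show ?thesis
    by (auto simp: stratum_primitive_def card_1_singleton_iff)
qed

lemma stratum_in_Alam: "open U \<Longrightarrow> Z \<in> Alam U \<Longrightarrow> stratum S Z \<in> Alam U"
  unfolding Alam_iff
  by (metis smooth_coeffs_stratum vanishes_off_valid_stratum lambda_degree_le_stratum)

lemma Clam_component_in_Clam:
  fixes Z :: "'n::{finite,linorder} series"
  shows "open U \<Longrightarrow> Z \<in> Alam U \<Longrightarrow> Clam_component Z \<in> Clam U"
  unfolding Clam_component_def by (intro in_Clam_if_in_stratum stratum_in_Alam in_stratum_stratum)

lemma in_stratum_Ci_component: "in_stratum {i} (Ci_component N Z i)"
  unfolding Ci_component_def by (intro in_stratum_subst_lambda_u in_stratum_khat in_stratum_stratum)

lemma Ci_component_in_Ci: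
  assumes "open U" "Z \<in> Alam U"
  shows "Ci_component N Z i \<in> Ci U i"
proof (rule in_Ci_if_in_stratum)
  have "smooth_coeffs U (stratum {i} Z)" "vanishes_off_valid (stratum {i} Z)"
    using stratum_in_Alam[OF assms] by (simp_all add: Alam_iff)
  then show "Ci_component N Z i \<in> Alam U"
    unfolding Ci_component_def Alam_iff
    using assms(1) lambda_degree_le_subst_lambda_u
    by (blast intro: smooth_coeffs_subst_lambda_u smooth_coeffs_khat vanishes_off_valid_subst_lambda_u
        vanishes_off_valid_khat)
  show "lambda_degree_le 0 (Ci_component N Z i)"
    unfolding Ci_component_def by (rule lambda_degree_le_subst_lambda_u)
qed (rule in_stratum_Ci_component)

context
  fixes U :: "(real,'n::{finite,linorder}) vec set" and f :: "'n \<Rightarrow> (real,'n) vec \<Rightarrow> real"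
  assumes open_U: "open U"
    and coordinates_distinct: "\<And>i j p. i \<noteq> j \<Longrightarrow> p \<in> U \<Longrightarrow> p $ i \<noteq> p $ j"
    and smooth_f: "\<And>i. smooth_on U (f i)"
    and f_nonzero: "\<And>i p. p \<in> U \<Longrightarrow> f i p \<noteq> 0"
begin

lemma Delta_primitive_in_Alam:
  assumes "Z \<in> Alam U" "lambda_degree_le N Z"
  shows "Delta_primitive f N Z \<in> Alam U"
proof -
  have P: "smooth_coeffs U (stratum S Z)" "vanishes_off_valid (stratum S Z)"
    "lambda_degree_le N (stratum S Z)" for S
    using stratum_in_Alam[OF open_U assms(1)] lambda_degree_le_stratum[OF assms(2)]
    by (simp_all add: Alam_iff)
  have inverse_f: "smooth_on U (\<lambda>p. inverse (f i p))" for i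
    using open_U smooth_f f_nonzero by (intro smooth_on_inverse)
  have singleton: "smooth_coeffs U (singleton_primitive f N Z i) \<and> vanishes_off_valid (singleton_primitive f N Z i)
      \<and> lambda_degree_le N (singleton_primitive f N Z i)" for i
    unfolding singleton_primitive_def[abs_def]
    by (intro conjI smooth_coeffs_cmult vanishes_off_valid_cmult lambda_degree_le_cmult open_U inverse_f
        smooth_coeffs_div_u_minus_lambda smooth_coeffs_khat vanishes_off_valid_div_u_minus_lambda
        vanishes_off_valid_khat lambda_degree_le_div_u_minus_lambda P)
  have mixed: "smooth_coeffs U (mixed_primitive f Z S) \<and> vanishes_off_valid (mixed_primitive f Z S)
      \<and> lambda_degree_le N (mixed_primitive f Z S)" if "2 \<le> card S" for S
  proof -
    have "Min S \<noteq> Max S" using Min_ne_Max_if_two_le_card[OF _ that] by simp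
    then have "smooth_on U (\<lambda>p. inverse ((p $ Min S - p $ Max S) * f m p))" for m
      using open_U smooth_f f_nonzero coordinates_distinct
      by (intro smooth_on_inverse smooth_on_mult smooth_on_diff smooth_on_component) auto
    then show ?thesis
      unfolding mixed_primitive_def[abs_def]
      by (intro conjI smooth_coeffs_diff smooth_coeffs_cmult vanishes_off_valid_diff vanishes_off_valid_cmult
          lambda_degree_le_diff lambda_degree_le_cmult smooth_coeffs_khat vanishes_off_valid_khat
          lambda_degree_le_khat open_U P)
  qed
  have "smooth_coeffs U (stratum_primitive f N Z S) \<and> vanishes_off_valid (stratum_primitive f N Z S)
      \<and> lambda_degree_le N (stratum_primitive f N Z S)" for S
    using singleton mixed open_U
    by (simp add: stratum_primitive_def smooth_on_const smooth_coeffs_def vanishes_off_valid_def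
        lambda_degree_le_def)
  then show ?thesis
    unfolding Alam_iff Delta_primitive_def[abs_def]
    by (intro conjI exI[of _ N] smooth_coeffs_sum vanishes_off_valid_sum lambda_degree_le_sum open_U) simp_all
qed

lemma singleton_stratum_decomposition:
  assumes "Delta f Z = (\<lambda>x p. 0)" "lambda_degree_le N Z"
    and "valid_mono (k,M,T)" "active (k,M,T) = {i}" "p \<in> U"
  shows "Z (k,M,T) p = dhat i (Ci_component N Z i) (k,M,T) p + Delta f (singleton_primitive f N Z i) (k,M,T) p"
proof -
  let ?P = "stratum {i} Z"
  have "dhat i ?P y p = 0" if "valid_mono y" for y
  proof -
    obtain k' M' T' where y: "y = (k',M',T')" by (cases y)
    have "dhat i Z (k',M',T') p = 0" if "active (k',M',T') = {i}"
      using dhat_zero_if_Delta_zero_Suc[of k' M' T' i f p N Z] \<open>valid_mono y\<close> that assms(1,2,5) f_nonzero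
      by (simp add: y)
    then show ?thesis using dhat_stratum[of k' M' T' i "{i}" Z p] \<open>valid_mono y\<close> by (auto simp: y)
  qed
  moreover have "khat i ?P (j,M',T') p = 0" if "N < j" for j M' T'
    using lambda_degree_le_khat[OF lambda_degree_le_stratum[OF assms(2)]] that
    by (simp add: lambda_degree_le_def)
  ultimately have "f i p * mult_u_minus_lambda i (dhat i (singleton_primitive f N Z i)) (k,M,T) p
      = ?P (k,M,T) p - dhat i (Ci_component N Z i) (k,M,T) p"
    unfolding singleton_primitive_def[abs_def] Ci_component_def
    using Delta_div_khat_singleton[where f=f, OF assms(3,4) f_nonzero[OF assms(5), of i]] by blast
  then show ?thesis
    using assms(4) by (simp add: Delta_eq_sum_active[OF assms(3)] stratum_def)
qed

lemma mixed_stratum_exact: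
  assumes "Delta f Z = (\<lambda>x p. 0)" "valid_mono (k,M,T)" "active (k,M,T) = S" "2 \<le> card S" "p \<in> U"
  shows "Delta f (mixed_primitive f Z S) (k,M,T) p = Z (k,M,T) p"
proof -
  let ?P = "stratum S Z" and ?m1 = "Min S" and ?m2 = "Max S"
  have S: "finite S" "S \<noteq> {}" using assms(4) by auto
  have m: "?m1 \<in> active (k,M,T)" "?m2 \<in> active (k,M,T)" "?m1 \<noteq> ?m2"
    using assms(3) Min_in[OF S] Max_in[OF S] Min_ne_Max_if_two_le_card[OF S(1) assms(4)] by simp_all
  have Delta_P: "Delta f ?P y p = 0" if "valid_mono y" for y
    using that assms(1) Delta_stratum[of _ _ _ f S Z p] by (cases y) simp
  define t where "t = (if k = 0 then 0 else Z (k - 1,M,T) p)"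
  have mult_P: "mult_u_minus_lambda m ?P (k,M,T) p = p $ m * Z (k,M,T) p - t" for m
    using assms(3) active_change_lambda[of "k - 1" M T k]
    by (simp add: mult_u_minus_lambda_def stratum_def t_def)
  have "Delta f (mixed_primitive f Z S) (k,M,T) p
      = inverse ((p $ ?m1 - p $ ?m2) * f ?m1 p) * f ?m1 p * mult_u_minus_lambda ?m1 ?P (k,M,T) p
        - inverse ((p $ ?m1 - p $ ?m2) * f ?m2 p) * f ?m2 p * mult_u_minus_lambda ?m2 ?P (k,M,T) p"
    unfolding mixed_primitive_def[abs_def] by (rule Delta_khat_pair[OF assms(2) m(1,2)]) fact
  also have "\<dots> = inverse ((p $ ?m1 - p $ ?m2) * f ?m1 p) * f ?m1 p * (p $ ?m1 * Z (k,M,T) p - t)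
        - inverse ((p $ ?m1 - p $ ?m2) * f ?m2 p) * f ?m2 p * (p $ ?m2 * Z (k,M,T) p - t)"
    unfolding mult_P ..
  also have "\<dots> = Z (k,M,T) p"
    using coordinates_distinct[OF m(3) assms(5)] f_nonzero[OF assms(5), of ?m1] f_nonzero[OF assms(5), of ?m2]
    by (rule inverse_weights_combination)
  finally show ?thesis .
qed

lemma cocycle_decomposition_on_stratum:
  assumes "Z \<in> Alam U" "Delta f Z = (\<lambda>x p. 0)" "lambda_degree_le N Z"
    and "valid_mono (k,M,T)" "p \<in> U"
  shows "Z (k,M,T) p = Clam_component Z (k,M,T) p + (\<Sum>i\<in>UNIV. dhat i (Ci_component N Z i) (k,M,T) p)
    + Delta f (Delta_primitive f N Z) (k,M,T) p"
proof -
  let ?S = "active (k,M,T)"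
  have DB: "Delta f (Delta_primitive f N Z) (k,M,T) p = Delta f (stratum_primitive f N Z ?S) (k,M,T) p"
    unfolding Delta_primitive_def[abs_def]
    by (rule Delta_sum_strata[OF assms(4) in_stratum_stratum_primitive])
  have a_out: "dhat i (Ci_component N Z i) (k,M,T) p = 0" if "?S \<noteq> {i}" for i
    using dhat_outside_stratum[OF assms(4) that in_stratum_Ci_component] .
  have "card ?S = 0 \<or> card ?S = 1 \<or> 2 \<le> card ?S" by arith
  then consider "?S = {}" | i where "?S = {i}" | "2 \<le> card ?S"
    by (auto simp: card_1_singleton_iff)
  then show ?thesis
  proof cases
    case 1
    then show ?thesis
      using a_out DB Delta_active_empty[OF assms(4) 1] by (simp add: Clam_component_def stratum_def)
  next
    case (2 i)
    have "(\<Sum>j\<in>UNIV. dhat j (Ci_component N Z j) (k,M,T) p) = dhat i (Ci_component N Z i) (k,M,T) p"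
      using a_out 2 by (intro sum_UNIV_eq_single) auto
    moreover have "stratum_primitive f N Z ?S = singleton_primitive f N Z i"
      using 2 by (simp add: stratum_primitive_def)
    ultimately show ?thesis
      using singleton_stratum_decomposition[OF assms(2,3,4) 2 assms(5)] DB 2
      by (simp add: Clam_component_def stratum_def)
  next
    case 3
    then have "stratum_primitive f N Z ?S = mixed_primitive f Z ?S"
      by (simp add: stratum_primitive_def)
    moreover have "(\<Sum>i\<in>UNIV. dhat i (Ci_component N Z i) (k,M,T) p) = 0"
    proof (intro sum.neutral ballI)
      fix i
      have "?S \<noteq> {i}" using 3 by auto
      then show "dhat i (Ci_component N Z i) (k,M,T) p = 0" by (rule a_out)
    qed
    ultimately show ?thesis
      using mixed_stratum_exact[OF assms(2,4) refl 3 assms(5)] DB 3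
      by (auto simp: Clam_component_def stratum_def)
  qed
qed

lemma cocycle_decomposition_at:
  assumes "Z \<in> Alam U" "Delta f Z = (\<lambda>x p. 0)" "lambda_degree_le N Z"
  shows "Z x p = Clam_component Z x p + (\<Sum>i\<in>UNIV. dhat i (Ci_component N Z i) x p)
    + Delta f (Delta_primitive f N Z) x p"
proof -
  obtain k M T where x: "x = (k,M,T)" by (cases x)
  have a: "Ci_component N Z i \<in> Alam U" for i
    using Ci_component_in_Ci[OF open_U assms(1)] unfolding Ci_iff by blast
  have B: "Delta_primitive f N Z \<in> Alam U"
    by (rule Delta_primitive_in_Alam[OF assms(1,3)])
  consider "p \<notin> U" | "\<not> valid_mono (k,M,T)" | "p \<in> U" "valid_mono (k,M,T)" by blast
  then show ?thesis
  proof cases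
    case 1
    then have zero: "F \<in> Alam U \<Longrightarrow> F y p = 0" for F y
      unfolding Alam_iff using smooth_coeffs_outside by blast
    have "Z x p = 0" "Clam_component Z x p = 0"
      using zero[OF assms(1)] zero[OF stratum_in_Alam[OF open_U assms(1)]] by (simp_all add: Clam_component_def)
    moreover have "dhat i (Ci_component N Z i) x p = 0" for i
      using zero[OF a] by (rule dhat_zero_at)
    moreover have "Delta f (Delta_primitive f N Z) x p = 0"
      using zero[OF B] by (intro Delta_eq_zero_if_dhat_zero dhat_zero_at)
    ultimately show ?thesis by simp
  next
    case 2
    have "Z x p = 0" "Clam_component Z x p = 0"
      using assms(1) 2 by (simp_all add: x Alam_iff vanishes_off_valid_def Clam_component_def stratum_def)
    moreover have "dhat i (Ci_component N Z i) x p = 0" for i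
      using vanishes_off_valid_dhat[of "Ci_component N Z i" i] a 2
      by (simp add: x Alam_iff vanishes_off_valid_def)
    moreover have "Delta f (Delta_primitive f N Z) x p = 0"
      using B 2 unfolding x Alam_iff by (blast intro: Delta_invalid)
    ultimately show ?thesis by simp
  next
    case 3
    then show ?thesis using cocycle_decomposition_on_stratum[OF assms] by (simp add: x)
  qed
qed

lemma cocycle_decomposition:
  assumes "Z \<in> Alam U" "Delta f Z = (\<lambda>x p. 0)"
  shows "\<exists>c\<in>Clam U. \<exists>a. (\<forall>i. a i \<in> Ci U i) \<and> (\<exists>B\<in>Alam U.
    Z = (\<lambda>x p. c x p + (\<Sum>i\<in>UNIV. dhat i (a i) x p) + Delta f B x p))"
proof -
  obtain N where N: "lambda_degree_le N Z" using assms(1) by (auto simp: Alam_iff)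
  have "Z = (\<lambda>x p. Clam_component Z x p + (\<Sum>i\<in>UNIV. dhat i (Ci_component N Z i) x p)
      + Delta f (Delta_primitive f N Z) x p)"
    using cocycle_decomposition_at[OF assms N] by (intro ext)
  moreover have "Clam_component Z \<in> Clam U" "Ci_component N Z i \<in> Ci U i" "Delta_primitive f N Z \<in> Alam U"
    for i
    using Clam_component_in_Clam Ci_component_in_Ci Delta_primitive_in_Alam open_U assms(1) N by auto
  ultimately show ?thesis by blast
qed

lemma dhat_Ci_zero_if_exact:
  assumes "\<And>i. a i \<in> Ci U i" "B \<in> Alam U" "\<And>x p. (\<Sum>i\<in>UNIV. dhat i (a i) x p) = Delta f B x p"
  shows "dhat i (a i) (k,M,T) p = 0"
proof -
  have a: "vanishes_off_valid (a i)" "smooth_coeffs U (a i)"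
    using assms(1) by (simp_all add: Ci_iff Alam_iff)
  obtain N where N: "lambda_degree_le N B" using assms(2) by (auto simp: Alam_iff)
  have lambda_zero: "Delta f B (Suc j, M, T) p = 0" for j
    using assms(3)[of "(Suc j, M, T)" p] dhat_Ci_lambda[OF assms(1), of "Suc j"] by simp
  consider "\<not> valid_mono (k,M,T)" | "p \<notin> U" | "k \<noteq> 0"
    | "valid_mono (k,M,T)" "active (k,M,T) \<noteq> {i}"
    | "valid_mono (k,M,T)" "p \<in> U" "k = 0" "active (k,M,T) = {i}" by blast
  then show ?thesis
  proof cases
    case 1
    then show ?thesis using vanishes_off_valid_dhat[OF a(1)] by (simp add: vanishes_off_valid_def)
  next
    case 2
    then show ?thesis using smooth_coeffs_outside[OF a(2)] by (intro dhat_zero_at)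
  next
    case 3
    then show ?thesis by (rule dhat_Ci_lambda[OF assms(1)])
  next
    case 4
    then show ?thesis by (rule dhat_Ci_not_singleton[OF assms(1)])
  next
    case 5
    have "dhat i B (0,M,T) p = 0"
      using dhat_zero_if_Delta_zero_Suc[OF _ _ f_nonzero N lambda_zero] 5 by simp
    moreover have "(\<Sum>l\<in>UNIV. dhat l (a l) (0,M,T) p) = dhat i (a i) (0,M,T) p"
      using dhat_Ci_not_singleton[OF assms(1)] 5 by (intro sum_UNIV_eq_single) simp
    ultimately show ?thesis
      using assms(3)[of "(0,M,T)" p] 5 by (simp add: Delta_eq_sum_active mult_u_minus_lambda_def)
  qed
qed

lemma decomposition_unique:
  assumes "c \<in> Clam U" "\<And>i. a i \<in> Ci U i" "B \<in> Alam U"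
    and "(\<lambda>x p. c x p + (\<Sum>i\<in>UNIV. dhat i (a i) x p)) = Delta f B"
  shows "c = (\<lambda>x p. 0) \<and> (\<forall>i. dhat i (a i) = (\<lambda>x p. 0))"
proof -
  have eq: "c x p + (\<Sum>i\<in>UNIV. dhat i (a i) x p) = Delta f B x p" for x p
    using assms(4) by (metis (no_types, lifting))
  have c_zero: "c x p = 0" for x p
    by (rule Clam_part_zero_if_exact[OF assms(1,2) eq])
  then have "dhat i (a i) (k,M,T) p = 0" for i k M T p
    using eq by (intro dhat_Ci_zero_if_exact[OF assms(2,3)]) simp
  then show ?thesis using c_zero by (auto simp: fun_eq_iff)
qed

end

theorem proposition3p1:
  fixes U :: "(real,'n::{finite,linorder}) vec set"
    and f :: "'n \<Rightarrow> (real,'n) vec \<Rightarrow> real"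
  assumes "open U" and "connected U" and "U \<noteq> {}"
    and "\<And>i j p. i \<noteq> j \<Longrightarrow> p \<in> U \<Longrightarrow> p $ i \<noteq> p $ j"
    and "\<And>i. smooth_on U (f i)"
    and "\<And>i p. p \<in> U \<Longrightarrow> f i p \<noteq> 0"
  shows
    "(\<forall>c\<in>Clam U. Delta f c = (\<lambda>x p. 0))
     \<and> (\<forall>i. \<forall>a\<in>Ci U i. Delta f (dhat i a) = (\<lambda>x p. 0))
     \<and> (\<forall>Z\<in>Alam U. Delta f Z = (\<lambda>x p. 0) \<longrightarrow>
          (\<exists>c\<in>Clam U. \<exists>a. (\<forall>i. a i \<in> Ci U i) \<and> (\<exists>B\<in>Alam U.
             Z = (\<lambda>x p. c x p + (\<Sum>i\<in>UNIV. dhat i (a i) x p) + Delta f B x p))))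
     \<and> (\<forall>c\<in>Clam U. \<forall>a. (\<forall>i. a i \<in> Ci U i) \<longrightarrow>
          (\<exists>B\<in>Alam U. (\<lambda>x p. c x p + (\<Sum>i\<in>UNIV. dhat i (a i) x p)) = Delta f B) \<longrightarrow>
          c = (\<lambda>x p. 0) \<and> (\<forall>i. dhat i (a i) = (\<lambda>x p. 0)))"
  using Delta_Clam Delta_dhat_Ci
    cocycle_decomposition[where U=U and f=f, OF assms(1,4-6)]
    decomposition_unique[where U=U and f=f, OF assms(1,4-6)]
  by blast
end
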